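(* Let $0<\varepsilon<1$, let $n\ge1$ and $m\ge1$ be integers, let $A=(a_{pq})$ be a real $n\times n$ matrix and $j\in\{1,\dots,n\}$ with $a_{1j}>0$. Suppose $\lambda>0$ is a simple eigenvalue of $A$ with $A\mathbf u=\lambda\mathbf u$ and $\mathbf v^TA=\lambda\mathbf v^T$ for some entrywise positive $\mathbf u,\mathbf v\in\mathbb R^n$. Let $k\in\{1,\dots,n\}$ be such that $c:=a_{1j}v_1+\sum_{i=1}^{n-k}a_{k+i,j}v_{k+i}>0$ (for $k=n$ this means $a_{1j}>0$). Let $E=\{(m+1,m+j)\}\cup\{(m+k+1,m+j),\dots,(m+n,m+j)\}$. In each part $B=(b_{pq})$ is a real matrix of order $m+n$ whose entries with $p,q\in\{m+1,\dots,m+n\}$ and $(p,q)\notin E$ equal $a_{p-m,q-m}$; in all parts $w_i=u_j$ for $1\le i\le m$, $w_i=u_{i-m}$ and $z_i=v_{i-m}$ for $m+1\le i\le m+n$. Then: 1. For every $s\in\{1,\dots,m\}$, let the remaining entries of $B$ be: $\lambda$ at the positions $(m,m+j),(1,2),(2,3),\dots,(m-1,m)$; $a_{1j}$ at $(m+1,1)$; $a_{p-m,j}$ at $(p,s)$ for $p\in\{m+k+1,\dots,m+n\}$; $0$ elsewhere. Then $\lambda$ is a simple eigenvalue of $B$, $B\mathbf w=\lambda\mathbf w$ and $\mathbf z^TB=\lambda\mathbf z^T$ where $z_i=\frac{a_{1j}v_1}{\lambda}$ for $1\le i\le s-1$ and $z_i=\frac{c}{\lambda}$ for $s\le i\le m$;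 consequently $B$ is algebraically positive. 2. For every $s\in\{1,\dots,m-1\}$ and $t\in\{1,\dots,m\}\setminus\{s+1\}$, let the remaining entries of $B$ be: $\lambda$ at the positions in $(\{(m,m+j)\}\cup\{(1,2),\dots,(m-1,m)\})\setminus\{(s,s+1)\}$; $\varepsilon\lambda$ at $(s,s+1)$; $a_{1j}$ at $(m+1,1)$; $(1-\varepsilon)\lambda$ at $(s,t)$; $a_{p-m,j}$ at $(p,t)$ for $p\in\{m+k+1,\dots,m+n\}$; $0$ elsewhere. Then $\lambda$ is a simple eigenvalue of $B$ with $B\mathbf w=\lambda\mathbf w$, $\mathbf z^TB=\lambda\mathbf z^T$, and $B$ is algebraically positive, where: if $t\le s$, $z_i=\frac{a_{1j}v_1}{\lambda}$ for $1\le i\le t-1$, $z_i=\frac{c}{\varepsilon\lambda}$ for $t\le i\le s$, $z_i=\frac{c}{\lambda}$ for $s+1\le i\le m$; if $t\ge s+2$, $z_i=\frac{a_{1j}v_1}{\lambda}$ for $1\le i\le s$, $z_i=\frac{\varepsilon a_{1j}v_1}{\lambda}$ for $s+1\le i\le t-1$, $z_i=\frac{c}{\lambda}$ for $t\le i\le m$. Further, $b_{st}z_s+\sum_{i=1}^{n-k}b_{m+k+i,t}z_{m+k+i}$ equals $\frac{c}{\varepsilon}-a_{1j}v_1$ if $t\le s$ and equals $c-\varepsilon a_{1j}v_1$ if $t\ge s+2$, and this quantity is positive for a suitable choice of $\varepsilon\in(0,1)$. 3. For every $t\in\{1,\dots,m\}$, let the remaining entries of $B$ be: $\lambda$ at $(1,2),\dots,(m-1,m)$;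 $\varepsilon\lambda$ at $(m,m+j)$; $a_{1j}$ at $(m+1,1)$; $(1-\varepsilon)\lambda$ at $(m,t)$; $a_{p-m,j}$ at $(p,t)$ for $p\in\{m+k+1,\dots,m+n\}$; $0$ elsewhere. Then $\lambda$ is a simple eigenvalue of $B$, $B\mathbf w=\lambda\mathbf w$ and $\mathbf z^TB=\lambda\mathbf z^T$ where $z_i=\frac{a_{1j}v_1}{\lambda}$ for $1\le i\le t-1$ and $z_i=\frac{c}{\varepsilon\lambda}$ for $t\le i\le m$; consequently $B$ is algebraically positive. Further, $b_{mt}z_m+\sum_{i=1}^{n-k}b_{m+k+i,t}z_{m+k+i}=\frac{c}{\varepsilon}-a_{1j}v_1$, and this is positive for a suitable choice of $\varepsilon\in(0,1)$.
   Context: A real square matrix $M$ is algebraically positive if there is a real polynomial $f$ such that every entry of $f(M)$ is positive. A simple eigenvalue is one of algebraic multiplicity one. Index ranges of the form $a\le i\le b$ with $a>b$ are empty. *)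

theory Defs
  imports "Jordan_Normal_Form.Jordan_Normal_Form"
begin

(* Conventions: matrices are JNF matrices ('a mat, 0-indexed). The paper's 1-based
   entry a_{pq} is  A $$ (p-1, q-1), and vector entry u_i is  u $ (i-1).
   The "tp" functions below take the paper's 1-based indices (p,q). *)

definition poly_mat :: "real poly \<Rightarrow> real mat \<Rightarrow> real mat" where
  "poly_mat f M = mat (dim_row M) (dim_row M)
     (\<lambda>(i,j). \<Sum>d\<le>degree f. coeff f d * (M ^\<^sub>m d) $$ (i,j))"

definition algebraically_positive :: "real mat \<Rightarrow> bool" where
  "algebraically_positive M \<longleftrightarrow>
     (\<exists>f. \<forall>i<dim_row M. \<forall>j<dim_row M. poly_mat f M $$ (i,j) > 0)"

definition simple_eigenvalue :: "real mat \<Rightarrow> real \<Rightarrow> bool" where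
  "simple_eigenvalue M l \<longleftrightarrow> order l (char_poly M) = 1"

(* the exceptional set E (1-based indices) *)
definition inE :: "nat \<Rightarrow> nat \<Rightarrow> nat \<Rightarrow> nat \<Rightarrow> nat \<Rightarrow> nat \<Rightarrow> bool" where
  "inE m n j k p q \<longleftrightarrow> q = m + j \<and> (p = m + 1 \<or> (m + k + 1 \<le> p \<and> p \<le> m + n))"

definition mkB :: "real mat \<Rightarrow> nat \<Rightarrow> nat \<Rightarrow> nat \<Rightarrow> nat \<Rightarrow> (nat \<Rightarrow> nat \<Rightarrow> real) \<Rightarrow> real mat" where
  "mkB A m n j k tp = mat (m + n) (m + n) (\<lambda>(p0,q0).
     let p = p0 + 1; q = q0 + 1 in
     if m < p \<and> m < q \<and> \<not> inE m n j k p q then A $$ (p - m - 1, q - m - 1) else tp p q)"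

definition top1 :: "real mat \<Rightarrow> real \<Rightarrow> nat \<Rightarrow> nat \<Rightarrow> nat \<Rightarrow> nat \<Rightarrow> nat \<Rightarrow> nat \<Rightarrow> nat \<Rightarrow> real" where
  "top1 A l m n j k s p q =
     (if (p,q) = (m, m + j) \<or> (q = p + 1 \<and> 1 \<le> p \<and> p \<le> m - 1) then l
      else if (p,q) = (m + 1, 1) then A $$ (0, j - 1)
      else if q = s \<and> m + k + 1 \<le> p \<and> p \<le> m + n then A $$ (p - m - 1, j - 1)
      else 0)"

definition top2 :: "real mat \<Rightarrow> real \<Rightarrow> real \<Rightarrow> nat \<Rightarrow> nat \<Rightarrow> nat \<Rightarrow> nat \<Rightarrow> nat \<Rightarrow> nat \<Rightarrow> nat \<Rightarrow> nat \<Rightarrow> real" where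
  "top2 A l eps m n j k s t p q =
     (if (p,q) = (s, s + 1) then eps * l
      else if (p,q) = (m, m + j) \<or> (q = p + 1 \<and> 1 \<le> p \<and> p \<le> m - 1) then l
      else if (p,q) = (m + 1, 1) then A $$ (0, j - 1)
      else if (p,q) = (s, t) then (1 - eps) * l
      else if q = t \<and> m + k + 1 \<le> p \<and> p \<le> m + n then A $$ (p - m - 1, j - 1)
      else 0)"

definition top3 :: "real mat \<Rightarrow> real \<Rightarrow> real \<Rightarrow> nat \<Rightarrow> nat \<Rightarrow> nat \<Rightarrow> nat \<Rightarrow> nat \<Rightarrow> nat \<Rightarrow> nat \<Rightarrow> real" where
  "top3 A l eps m n j k t p q =
     (if q = p + 1 \<and> 1 \<le> p \<and> p \<le> m - 1 then l
      else if (p,q) = (m, m + j) then eps * l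
      else if (p,q) = (m + 1, 1) then A $$ (0, j - 1)
      else if (p,q) = (m, t) then (1 - eps) * l
      else if q = t \<and> m + k + 1 \<le> p \<and> p \<le> m + n then A $$ (p - m - 1, j - 1)
      else 0)"

definition mkvec :: "nat \<Rightarrow> nat \<Rightarrow> (nat \<Rightarrow> real) \<Rightarrow> real vec \<Rightarrow> real vec" where
  "mkvec m n tp x = vec (m + n) (\<lambda>i0. if i0 < m then tp (i0 + 1) else x $ (i0 - m))"

end

theory Submission
  imports Defs
begin

(* All three matrices B have the same shape: A, with some entries of its j-th column removed,
   bordered by m new rows and columns whose leading m x m block is a weighted path leading into
   column m + j. Every eigenvector of B for
   l is constant on the new coordinates (equal to its entry m + j) and restricts to an eigenvector
   of A, so the eigenspace of B is the line through w; since z^T w > 0, no Jordan chain can start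
   at w and l is simple. Finally, for a simple eigenvalue l with positive right and left
   eigenvectors w and z, Cayley-Hamilton turns g = char_poly B / (x - l) into the rank one matrix
   g(B) = g(l) / (z^T w) * w z^T, which is entrywise positive after rescaling. *)

lemma index_mult_mat_vec_sum:
  "A \<in> carrier_mat nr nc \<Longrightarrow> x \<in> carrier_vec nc \<Longrightarrow> i < nr \<Longrightarrow>
    (A *\<^sub>v x) $ i = (\<Sum>j<nc. A $$ (i, j) * x $ j)"
  by (auto simp: scalar_prod_def atLeast0LessThan intro!: sum.cong)

lemma index_transpose_mult_mat_vec_sum:
  "A \<in> carrier_mat nr nc \<Longrightarrow> x \<in> carrier_vec nr \<Longrightarrow> i < nc \<Longrightarrow>
    (transpose_mat A *\<^sub>v x) $ i = (\<Sum>j<nr. A $$ (j, i) * x $ j)"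
  by (auto simp: scalar_prod_def atLeast0LessThan intro!: sum.cong)

lemma index_mult_mat_sum:
  "A \<in> carrier_mat nr n \<Longrightarrow> B \<in> carrier_mat n nc \<Longrightarrow> i < nr \<Longrightarrow> j < nc \<Longrightarrow>
    (A * B) $$ (i, j) = (\<Sum>k<n. A $$ (i, k) * B $$ (k, j))"
  by (auto simp: scalar_prod_def atLeast0LessThan intro!: sum.cong)

lemma sum_lessThan_Suc_head_delta:
  fixes f :: "nat \<Rightarrow> 'a :: semiring_0"
  assumes "i < Suc n"
  shows "(\<Sum>k<Suc n. (if k = 0 then a else if k = i then b else 0) * f k)
    = a * f 0 + (if i = 0 then 0 else b * f i)"
  using assms unfolding sum.lessThan_Suc_shift
  by (cases i) (auto simp: if_distrib[where f = "\<lambda>x. x * _"] sum.delta cong: if_cong)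

subsection \<open>Deflation at a right eigenvector\<close>

definition id_with_first_col :: "'a :: field vec \<Rightarrow> nat \<Rightarrow> 'a mat" where
  "id_with_first_col w n = mat n n (\<lambda>(i, j). if j = 0 then w $ i else if i = j then 1 else 0)"

lemma id_with_first_col_inverse:
  fixes w :: "'a :: field vec" and n :: nat
  assumes w0: "w $ 0 \<noteq> 0"
  defines "w' \<equiv> vec (Suc n) (\<lambda>i. if i = 0 then 1 / w $ 0 else - w $ i / w $ 0)"
  shows "id_with_first_col w (Suc n) * id_with_first_col w' (Suc n) = 1\<^sub>m (Suc n)"
    and "id_with_first_col w' (Suc n) * id_with_first_col w (Suc n) = 1\<^sub>m (Suc n)"
proof -
  let ?P = "id_with_first_col w (Suc n)" and ?Q = "id_with_first_col w' (Suc n)"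
  have P: "?P \<in> carrier_mat (Suc n) (Suc n)" and Q: "?Q \<in> carrier_mat (Suc n) (Suc n)"
    by (simp_all add: id_with_first_col_def)
  show "?P * ?Q = 1\<^sub>m (Suc n)"
  proof (rule eq_matI)
    fix i j assume ij: "i < dim_row (1\<^sub>m (Suc n))" "j < dim_col (1\<^sub>m (Suc n))"
    have "(?P * ?Q) $$ (i, j) = (\<Sum>k<Suc n. (if k = 0 then w $ i else if k = i then 1 else 0) * ?Q $$ (k, j))"
      using ij by (subst index_mult_mat_sum[OF P Q]) (auto simp: id_with_first_col_def intro!: sum.cong)
    also have "\<dots> = 1\<^sub>m (Suc n) $$ (i, j)"
      using ij w0 by (subst sum_lessThan_Suc_head_delta) (auto simp: id_with_first_col_def w'_def field_simps)
    finally show "(?P * ?Q) $$ (i, j) = 1\<^sub>m (Suc n) $$ (i, j)" .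
  qed (use P Q in auto)
  show "?Q * ?P = 1\<^sub>m (Suc n)"
  proof (rule eq_matI)
    fix i j assume ij: "i < dim_row (1\<^sub>m (Suc n))" "j < dim_col (1\<^sub>m (Suc n))"
    have "(?Q * ?P) $$ (i, j) = (\<Sum>k<Suc n. (if k = 0 then w' $ i else if k = i then 1 else 0) * ?P $$ (k, j))"
      using ij by (subst index_mult_mat_sum[OF Q P]) (auto simp: id_with_first_col_def intro!: sum.cong)
    also have "\<dots> = 1\<^sub>m (Suc n) $$ (i, j)"
      using ij w0 by (subst sum_lessThan_Suc_head_delta) (auto simp: id_with_first_col_def w'_def field_simps)
    finally show "(?Q * ?P) $$ (i, j) = 1\<^sub>m (Suc n) $$ (i, j)" .
  qed (use P Q in auto)
qed

(* Wielandt deflation: conjugation by id_with_first_col w makes M block upper triangular, with l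
   in the corner and this matrix in the lower right block. *)
definition deflation_mat :: "'a :: field mat \<Rightarrow> 'a vec \<Rightarrow> 'a mat" where
  "deflation_mat M w = mat (dim_row M - 1) (dim_row M - 1)
     (\<lambda>(i, j). M $$ (Suc i, Suc j) - w $ Suc i * M $$ (0, Suc j) / w $ 0)"

lemma deflation_mat_carrier:
  "M \<in> carrier_mat (Suc n) (Suc n) \<Longrightarrow> deflation_mat M w \<in> carrier_mat n n"
  by (simp add: deflation_mat_def)

lemma char_poly_deflation:
  fixes M :: "'a :: field mat"
  assumes M: "M \<in> carrier_mat (Suc n) (Suc n)" and w: "w \<in> carrier_vec (Suc n)"
    and w0: "w $ 0 \<noteq> 0" and ev: "M *\<^sub>v w = l \<cdot>\<^sub>v w"
  shows "char_poly M = [:-l, 1:] * char_poly (deflation_mat M w)"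
proof -
  define C where "C = deflation_mat M w"
  define A1 where "A1 = mat 1 1 (\<lambda>_. l)"
  define A2 where "A2 = mat 1 n (\<lambda>(_, j). M $$ (0, Suc j) / w $ 0)"
  define T where "T = four_block_mat A1 A2 (0\<^sub>m n 1) C"
  define P where "P = id_with_first_col w (Suc n)"
  define Q where "Q = id_with_first_col (vec (Suc n) (\<lambda>i. if i = 0 then 1 / w $ 0 else - w $ i / w $ 0)) (Suc n)"
  have C: "C \<in> carrier_mat n n" using M by (simp add: C_def deflation_mat_carrier)
  have A1: "A1 \<in> carrier_mat 1 1" and A2: "A2 \<in> carrier_mat 1 n" by (auto simp: A1_def A2_def)
  have T: "T \<in> carrier_mat (Suc n) (Suc n)" using four_block_carrier_mat[OF A1 C] by (simp add: T_def)
  have P: "P \<in> carrier_mat (Suc n) (Suc n)" and Q: "Q \<in> carrier_mat (Suc n) (Suc n)"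
    by (simp_all add: P_def Q_def id_with_first_col_def)
  have T_entry: "T $$ (i, j) = (if j = 0 then (if i = 0 then l else 0)
      else if i = 0 then M $$ (0, j) / w $ 0 else M $$ (i, j) - w $ i * M $$ (0, j) / w $ 0)"
    if "i < Suc n" "j < Suc n" for i j
    using that A1 C M by (cases i; cases j) (auto simp: T_def A1_def A2_def C_def deflation_mat_def)
  have PT: "P * T = M * P"
  proof (rule eq_matI)
    fix i j assume "i < dim_row (M * P)" "j < dim_col (M * P)"
    hence ij: "i < Suc n" "j < Suc n" using M P by auto
    have "(P * T) $$ (i, j) = (\<Sum>k<Suc n. (if k = 0 then w $ i else if k = i then 1 else 0) * T $$ (k, j))"
      using ij by (subst index_mult_mat_sum[OF P T]) (auto simp: P_def id_with_first_col_def intro!: sum.cong)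
    also have "\<dots> = (if j = 0 then l * w $ i else M $$ (i, j))"
      using ij w0 by (subst sum_lessThan_Suc_head_delta) (auto simp: T_entry field_simps)
    also have "\<dots> = (\<Sum>k<Suc n. M $$ (i, k) * P $$ (k, j))"
    proof (cases "j = 0")
      case True
      have "(M *\<^sub>v w) $ i = l * w $ i" using ev ij w by simp
      thus ?thesis using True ij by (simp add: index_mult_mat_vec_sum[OF M w] P_def id_with_first_col_def)
    next
      case False
      thus ?thesis using ij
        by (simp add: P_def id_with_first_col_def if_distrib[where f = "\<lambda>x. _ * x"] sum.delta' cong: if_cong)
    qed
    also have "\<dots> = (M * P) $$ (i, j)" using ij by (simp add: index_mult_mat_sum[OF M P])
    finally show "(P * T) $$ (i, j) = (M * P) $$ (i, j)" .
  qed (use P T M in auto)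
  have PQ: "P * Q = 1\<^sub>m (Suc n)" and QP: "Q * P = 1\<^sub>m (Suc n)"
    unfolding P_def Q_def using w0 by (rule id_with_first_col_inverse)+
  have "M = P * T * Q"
    using M P Q by (simp add: PT PQ assoc_mult_mat[OF M P Q, symmetric])
  hence "similar_mat M T" using M T P Q PQ QP by (intro similar_matI[where P = P and Q = Q]) auto
  hence "char_poly M = char_poly T" by (rule char_poly_similar)
  also have "\<dots> = char_poly A1 * char_poly C"
    unfolding T_def by (rule char_poly_four_block_zeros_col[OF A1 A2 C])
  also have "char_poly A1 = [:-l, 1:]"
    by (subst char_poly_upper_triangular[OF A1]) (auto simp: A1_def upper_triangular_def diag_mat_def)
  finally show ?thesis unfolding C_def .
qed

lemma order_char_poly_deflation:
  fixes M :: "'a :: field mat"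
  assumes M: "M \<in> carrier_mat (Suc n) (Suc n)" and w: "w \<in> carrier_vec (Suc n)"
    and w0: "w $ 0 \<noteq> 0" and ev: "M *\<^sub>v w = l \<cdot>\<^sub>v w"
  shows "order l (char_poly M) = Suc (order l (char_poly (deflation_mat M w)))"
proof -
  have "char_poly (deflation_mat M w) \<noteq> 0"
    using degree_monic_char_poly[OF deflation_mat_carrier[OF M, of w]] by auto
  hence "order l (char_poly M) = order l [:-l, 1:] + order l (char_poly (deflation_mat M w))"
    unfolding char_poly_deflation[OF M w w0 ev]
    by (intro order_mult) (metis mult_eq_0_iff pCons_eq_0_iff one_neq_zero)
  thus ?thesis by simp
qed

lemma deflation_mat_mult_tail:
  fixes M :: "'a :: field mat"
  assumes M: "M \<in> carrier_mat (Suc n) (Suc n)" and d: "d \<in> carrier_vec (Suc n)"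
    and d0: "d $ 0 = 0" and i: "i < n"
  shows "(deflation_mat M w *\<^sub>v vec n (\<lambda>i. d $ Suc i)) $ i
    = (M *\<^sub>v d) $ Suc i - w $ Suc i / w $ 0 * (M *\<^sub>v d) $ 0"
proof -
  have Md: "(M *\<^sub>v d) $ p = (\<Sum>q<n. M $$ (p, Suc q) * d $ Suc q)" if "p < Suc n" for p
    unfolding index_mult_mat_vec_sum[OF M d that] sum.lessThan_Suc_shift using d0 by simp
  have "(deflation_mat M w *\<^sub>v vec n (\<lambda>i. d $ Suc i)) $ i
      = (\<Sum>q<n. (M $$ (Suc i, Suc q) - w $ Suc i * M $$ (0, Suc q) / w $ 0) * d $ Suc q)"
    using i M by (subst index_mult_mat_vec_sum[OF deflation_mat_carrier[OF M]])
      (auto simp: deflation_mat_def intro!: sum.cong)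
  also have "\<dots> = (\<Sum>q<n. M $$ (Suc i, Suc q) * d $ Suc q)
      - w $ Suc i / w $ 0 * (\<Sum>q<n. M $$ (0, Suc q) * d $ Suc q)"
    by (simp add: sum_subtractf sum_distrib_left left_diff_distrib field_simps)
  finally show ?thesis using i by (simp add: Md)
qed

lemma eigenvector_proportional_if_simple:
  fixes M :: "'a :: field mat"
  assumes M: "M \<in> carrier_mat (Suc n) (Suc n)" and w: "w \<in> carrier_vec (Suc n)"
    and w0: "w $ 0 \<noteq> 0" and ev: "M *\<^sub>v w = l \<cdot>\<^sub>v w"
    and simple: "order l (char_poly M) = 1"
    and x: "x \<in> carrier_vec (Suc n)" and xev: "M *\<^sub>v x = l \<cdot>\<^sub>v x"
  shows "x = (x $ 0 / w $ 0) \<cdot>\<^sub>v w"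
proof -
  define C where "C = deflation_mat M w"
  have C: "C \<in> carrier_mat n n" using M by (simp add: C_def deflation_mat_carrier)
  have "order l (char_poly C) = 0" using order_char_poly_deflation[OF M w w0 ev] simple by (simp add: C_def)
  moreover have "char_poly C \<noteq> 0" using degree_monic_char_poly[OF C] by auto
  ultimately have not_ev: "\<not> eigenvalue C l"
    by (simp add: eigenvalue_root_char_poly[OF C] order_root)
  define d where "d = x - (x $ 0 / w $ 0) \<cdot>\<^sub>v w"
  have d: "d \<in> carrier_vec (Suc n)" and d0: "d $ 0 = 0" using x w w0 by (auto simp: d_def)
  have "M *\<^sub>v d = l \<cdot>\<^sub>v x - (x $ 0 / w $ 0) \<cdot>\<^sub>v (l \<cdot>\<^sub>v w)"
    using M x w unfolding d_def by (simp add: mult_minus_distrib_mat_vec mult_mat_vec xev ev)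
  also have "\<dots> = l \<cdot>\<^sub>v d"
    using x w unfolding d_def by (intro eq_vecI) (simp_all add: algebra_simps)
  finally have Md: "M *\<^sub>v d = l \<cdot>\<^sub>v d" .
  define y where "y = vec n (\<lambda>i. d $ Suc i)"
  have "C *\<^sub>v y = l \<cdot>\<^sub>v y"
  proof (rule eq_vecI)
    fix i assume "i < dim_vec (l \<cdot>\<^sub>v y)"
    hence i: "i < n" by (simp add: y_def)
    show "(C *\<^sub>v y) $ i = (l \<cdot>\<^sub>v y) $ i"
      unfolding C_def y_def deflation_mat_mult_tail[OF M d d0 i] Md using i d d0 by simp
  qed (use C in \<open>simp add: y_def\<close>)
  moreover have "y \<in> carrier_vec n" by (simp add: y_def)
  ultimately have y0: "y = 0\<^sub>v n" using not_ev C unfolding eigenvalue_def eigenvector_def by auto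
  have "d $ Suc i = 0" if "i < n" for i
    using arg_cong[OF y0, of "\<lambda>y. y $ i"] that by (simp add: y_def)
  hence d_zero: "d $ i = 0" if "i < Suc n" for i using that d0 by (cases i) simp_all
  show ?thesis
  proof (rule eq_vecI)
    fix i assume "i < dim_vec ((x $ 0 / w $ 0) \<cdot>\<^sub>v w)"
    hence i: "i < Suc n" using w by simp
    have "d $ i = x $ i - (x $ 0 / w $ 0) * w $ i" using i x w by (simp add: d_def)
    thus "x $ i = ((x $ 0 / w $ 0) \<cdot>\<^sub>v w) $ i" using d_zero[OF i] i w by simp
  qed (use x w in simp)
qed

(* Were l a root of the deflated characteristic polynomial, an eigenvector of the deflation would
   lift to some x with M x - l x in the span of w; pairing with z shows M x = l x. *)
lemma simple_if_eigenspace_line: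
  fixes M :: "'a :: field mat"
  assumes M: "M \<in> carrier_mat (Suc n) (Suc n)" and w: "w \<in> carrier_vec (Suc n)"
    and w0: "w $ 0 \<noteq> 0" and ev: "M *\<^sub>v w = l \<cdot>\<^sub>v w"
    and line: "\<And>x. x \<in> carrier_vec (Suc n) \<Longrightarrow> M *\<^sub>v x = l \<cdot>\<^sub>v x \<Longrightarrow> \<exists>a. x = a \<cdot>\<^sub>v w"
    and z: "z \<in> carrier_vec (Suc n)" and zev: "transpose_mat M *\<^sub>v z = l \<cdot>\<^sub>v z"
    and zw: "z \<bullet> w \<noteq> 0"
  shows "order l (char_poly M) = 1"
proof (rule ccontr)
  define C where "C = deflation_mat M w"
  have C: "C \<in> carrier_mat n n" using M by (simp add: C_def deflation_mat_carrier)
  assume "order l (char_poly M) \<noteq> 1"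
  hence "order l (char_poly C) \<noteq> 0" using order_char_poly_deflation[OF M w w0 ev] by (simp add: C_def)
  hence "eigenvalue C l" by (simp add: eigenvalue_root_char_poly[OF C] order_root)
  then obtain y where y: "y \<in> carrier_vec n" "y \<noteq> 0\<^sub>v n" and Cy: "C *\<^sub>v y = l \<cdot>\<^sub>v y"
    unfolding eigenvalue_def eigenvector_def using C by auto
  define x where "x = vec (Suc n) (\<lambda>i. if i = 0 then 0 else y $ (i - 1))"
  have x: "x \<in> carrier_vec (Suc n)" and x0: "x $ 0 = 0" by (simp_all add: x_def)
  have y_x: "vec n (\<lambda>i. x $ Suc i) = y" using y by (intro eq_vecI) (simp_all add: x_def)
  define \<rho> where "\<rho> = (M *\<^sub>v x) $ 0"
  have Mx: "M *\<^sub>v x = l \<cdot>\<^sub>v x + (\<rho> / w $ 0) \<cdot>\<^sub>v w"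
  proof (rule eq_vecI)
    fix i assume "i < dim_vec (l \<cdot>\<^sub>v x + (\<rho> / w $ 0) \<cdot>\<^sub>v w)"
    hence i: "i < Suc n" using w by simp
    show "(M *\<^sub>v x) $ i = (l \<cdot>\<^sub>v x + (\<rho> / w $ 0) \<cdot>\<^sub>v w) $ i"
    proof (cases i)
      case 0 thus ?thesis using x w w0 x0 by (simp add: \<rho>_def)
    next
      case (Suc i')
      hence i': "i' < n" using i by simp
      have "l * y $ i' = (M *\<^sub>v x) $ Suc i' - w $ Suc i' / w $ 0 * \<rho>"
        using deflation_mat_mult_tail[OF M x x0 i', of w] Cy y i' by (simp add: y_x C_def \<rho>_def)
      thus ?thesis using Suc i' x w y by (simp add: x_def)
    qed
  qed (use M w in simp)
  have "l * (z \<bullet> x) = z \<bullet> (M *\<^sub>v x)"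
    using transpose_vec_mult_scalar[OF M x z] z x by (simp add: zev)
  also have "\<dots> = l * (z \<bullet> x) + (\<rho> / w $ 0) * (z \<bullet> w)"
    unfolding Mx using z x w by (simp add: scalar_prod_add_distrib[of _ "Suc n"])
  finally have "\<rho> = 0" using zw w0 by simp
  hence "M *\<^sub>v x = l \<cdot>\<^sub>v x" unfolding Mx using x w by (intro eq_vecI) simp_all
  then obtain a where a: "x = a \<cdot>\<^sub>v w" using line[OF x] by blast
  hence "a = 0" using x0 w w0 by (metis carrier_vecD index_smult_vec(1) mult_eq_0_iff zero_less_Suc)
  hence "x = 0\<^sub>v (Suc n)" using a w by (intro eq_vecI) simp_all
  hence "y = 0\<^sub>v n" unfolding y_x[symmetric] by (intro eq_vecI) simp_all
  thus False using y by simp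
qed

subsection \<open>Cayley--Hamilton\<close>

lemma poly_mat_index_lessThan:
  assumes "degree f < D" "i < dim_row M" "j < dim_row M"
  shows "poly_mat f M $$ (i, j) = (\<Sum>d<D. coeff f d * (M ^\<^sub>m d) $$ (i, j))"
proof -
  have "poly_mat f M $$ (i, j) = (\<Sum>d\<le>degree f. coeff f d * (M ^\<^sub>m d) $$ (i, j))"
    using assms by (simp add: poly_mat_def)
  also have "\<dots> = (\<Sum>d<D. coeff f d * (M ^\<^sub>m d) $$ (i, j))"
    by (rule sum.mono_neutral_left) (use assms in \<open>auto simp: coeff_eq_0\<close>)
  finally show ?thesis .
qed

definition adj_coeff_mat :: "'a :: comm_ring_1 mat \<Rightarrow> nat \<Rightarrow> 'a mat" where
  "adj_coeff_mat A d = mat (dim_row A) (dim_row A)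
     (\<lambda>(i, j). coeff (adj_mat (char_poly_matrix A) $$ (i, j)) d)"

lemma adj_coeff_mat_carrier: "A \<in> carrier_mat n n \<Longrightarrow> adj_coeff_mat A d \<in> carrier_mat n n"
  by (simp add: adj_coeff_mat_def)

lemma adj_coeff_mat_eventually_zero:
  assumes A: "A \<in> carrier_mat n n"
  obtains K where "\<And>d. K \<le> d \<Longrightarrow> adj_coeff_mat A d = 0\<^sub>m n n"
proof
  let ?deg = "\<lambda>i j. degree (adj_mat (char_poly_matrix A) $$ (i, j))"
  fix d assume d: "(\<Sum>i<n. \<Sum>j<n. ?deg i j) + 1 \<le> d"
  show "adj_coeff_mat A d = 0\<^sub>m n n"
  proof (rule eq_matI)
    fix i j assume ij: "i < dim_row (0\<^sub>m n n)" "j < dim_col (0\<^sub>m n n)"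
    have "?deg i j \<le> (\<Sum>j<n. ?deg i j)"
      by (rule member_le_sum) (use ij in auto)
    also have "\<dots> \<le> (\<Sum>i<n. \<Sum>j<n. ?deg i j)"
      by (rule member_le_sum[of i "{..<n}" "\<lambda>i. \<Sum>j<n. ?deg i j"]) (use ij in auto)
    finally show "adj_coeff_mat A d $$ (i, j) = 0\<^sub>m n n $$ (i, j)"
      using ij d A by (simp add: adj_coeff_mat_def coeff_eq_0)
  qed (use A in \<open>simp_all add: adj_coeff_mat_def\<close>)
qed

(* Coefficient d of the identity (xI - A) adj (xI - A) = char_poly A I. *)
lemma coeff_char_poly_smult_one_mat:
  fixes A :: "'a :: comm_ring_1 mat"
  assumes A: "A \<in> carrier_mat n n"
  shows "coeff (char_poly A) d \<cdot>\<^sub>m 1\<^sub>m n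
    = (if d = 0 then 0\<^sub>m n n else adj_coeff_mat A (d - 1)) - A * adj_coeff_mat A d"
    (is "?L = ?R")
proof (rule eq_matI)
  define X where "X = char_poly_matrix A"
  define Adj where "Adj = adj_mat X"
  have X: "X \<in> carrier_mat n n" using A by (simp add: X_def)
  have Adj: "Adj \<in> carrier_mat n n" and XAdj: "X * Adj = char_poly A \<cdot>\<^sub>m 1\<^sub>m n"
    using adj_mat[OF X] by (simp_all add: Adj_def X_def char_poly_def)
  have C: "adj_coeff_mat A d \<in> carrier_mat n n" using A by (rule adj_coeff_mat_carrier)
  fix i j assume "i < dim_row ?R" "j < dim_col ?R"
  hence ij: "i < n" "j < n" using A C by auto
  have "(X * Adj) $$ (i, j) = (\<Sum>k<n. X $$ (i, k) * Adj $$ (k, j))"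
    by (rule index_mult_mat_sum[OF X Adj ij])
  also have "\<dots> = (\<Sum>k<n. (if i = k then [:0, 1:] * Adj $$ (k, j) else 0) + [:- A $$ (i, k):] * Adj $$ (k, j))"
    using ij A by (intro sum.cong) (auto simp: X_def char_poly_matrix_def distrib_right)
  also have "\<dots> = [:0, 1:] * Adj $$ (i, j) + (\<Sum>k<n. [:- A $$ (i, k):] * Adj $$ (k, j))"
    by (simp only: sum.distrib sum.delta' finite_lessThan) (use ij in simp)
  finally have "coeff ((X * Adj) $$ (i, j)) d
      = (if d = 0 then 0 else coeff (Adj $$ (i, j)) (d - 1)) - (\<Sum>k<n. A $$ (i, k) * coeff (Adj $$ (k, j)) d)"
    by (cases d) (simp_all add: coeff_sum sum_negf coeff_pCons)
  moreover have "(A * adj_coeff_mat A d) $$ (i, j) = (\<Sum>k<n. A $$ (i, k) * coeff (Adj $$ (k, j)) d)"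
    unfolding index_mult_mat_sum[OF A C ij] using ij A
    by (intro sum.cong) (simp_all add: adj_coeff_mat_def Adj_def X_def)
  moreover have "coeff ((X * Adj) $$ (i, j)) d = ?L $$ (i, j)"
    using XAdj ij by (cases "i = j") simp_all
  moreover have "?R $$ (i, j) = (if d = 0 then 0 else coeff (Adj $$ (i, j)) (d - 1)) - (A * adj_coeff_mat A d) $$ (i, j)"
    using ij A C by (cases d) (simp_all add: adj_coeff_mat_def Adj_def X_def)
  ultimately show "?L $$ (i, j) = ?R $$ (i, j)" by simp
qed (use A in \<open>simp_all add: adj_coeff_mat_def\<close>)

theorem cayley_hamilton:
  fixes A :: "real mat"
  assumes A: "A \<in> carrier_mat n n"
  shows "poly_mat (char_poly A) A = 0\<^sub>m n n"
proof (rule eq_matI)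
  define S where "S d = (if d = 0 then 0\<^sub>m n n else adj_coeff_mat A (d - 1))" for d
  have S: "S d \<in> carrier_mat n n" for d using adj_coeff_mat_carrier[OF A] by (simp add: S_def)
  obtain K where K: "\<And>d. K \<le> d \<Longrightarrow> adj_coeff_mat A d = 0\<^sub>m n n"
    using adj_coeff_mat_eventually_zero[OF A] by blast
  fix i j assume "i < dim_row (0\<^sub>m n n)" "j < dim_col (0\<^sub>m n n)"
  hence ij: "i < n" "j < n" by auto
  define D where "D = max (degree (char_poly A) + 1) (K + 1)"
  define F where "F d = (A ^\<^sub>m d * S d) $$ (i, j)" for d
  have telescope: "coeff (char_poly A) d * (A ^\<^sub>m d) $$ (i, j) = F d - F (Suc d)" for d
  proof -
    have Ad: "A ^\<^sub>m d \<in> carrier_mat n n" using A by simp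
    have "coeff (char_poly A) d * (A ^\<^sub>m d) $$ (i, j)
        = (A ^\<^sub>m d * (coeff (char_poly A) d \<cdot>\<^sub>m 1\<^sub>m n)) $$ (i, j)"
      using ij Ad A by (simp add: mult_smult_distrib[OF Ad one_carrier_mat] right_mult_one_mat[OF Ad])
    also have "A ^\<^sub>m d * (coeff (char_poly A) d \<cdot>\<^sub>m 1\<^sub>m n)
        = A ^\<^sub>m d * S d - A ^\<^sub>m d * (A * adj_coeff_mat A d)"
      unfolding coeff_char_poly_smult_one_mat[OF A] S_def[symmetric]
      by (rule mult_minus_distrib_mat[OF Ad S]) (use A adj_coeff_mat_carrier[OF A] in simp)
    also have "A ^\<^sub>m d * (A * adj_coeff_mat A d) = A ^\<^sub>m Suc d * S (Suc d)"
      using assoc_mult_mat[OF Ad A adj_coeff_mat_carrier[OF A]] by (simp add: S_def)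
    finally show ?thesis
      unfolding F_def using ij A S[of d] S[of "Suc d"] by simp
  qed
  have "poly_mat (char_poly A) A $$ (i, j) = (\<Sum>d<D. coeff (char_poly A) d * (A ^\<^sub>m d) $$ (i, j))"
    by (rule poly_mat_index_lessThan) (use ij A in \<open>auto simp: D_def\<close>)
  also have "\<dots> = F 0 - F D" unfolding telescope by (rule sum_lessThan_telescope')
  also have "F 0 = 0" using ij A by (simp add: F_def S_def)
  also have "F D = 0" using ij A K[of "D - 1"] by (simp add: F_def S_def D_def)
  finally show "poly_mat (char_poly A) A $$ (i, j) = 0\<^sub>m n n $$ (i, j)" using ij by simp
qed (use A in \<open>simp_all add: poly_mat_def\<close>)

subsection \<open>Algebraic positivity from positive eigenvectors\<close>

lemma coeff_mult_monic_linear: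
  fixes g :: "'a :: comm_ring_1 poly"
  shows "coeff ([:-l, 1:] * g) d = (if d = 0 then 0 else coeff g (d - 1)) - l * coeff g d"
  by (cases d) (simp_all add: coeff_pCons algebra_simps)

lemma pow_mat_Suc_left: "M \<in> carrier_mat n n \<Longrightarrow> M ^\<^sub>m Suc d = M * M ^\<^sub>m d"
proof (induction d)
  case (Suc d)
  hence "M ^\<^sub>m Suc (Suc d) = (M * M ^\<^sub>m d) * M" by simp
  also have "\<dots> = M * (M ^\<^sub>m d * M)" using Suc.prems by (simp add: assoc_mult_mat[of _ n n _ n _ n])
  finally show ?case by simp
qed simp

lemma left_eigenvector_pow_mat:
  fixes M :: "'a :: comm_ring_1 mat"
  assumes M: "M \<in> carrier_mat n n" and z: "z \<in> carrier_vec n"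
    and zev: "transpose_mat M *\<^sub>v z = l \<cdot>\<^sub>v z" and j: "j < n"
  shows "(\<Sum>i<n. z $ i * (M ^\<^sub>m d) $$ (i, j)) = l ^ d * z $ j"
  using j
proof (induction d arbitrary: j)
  case 0
  thus ?case using M by (simp add: sum.delta' if_distrib cong: if_cong)
next
  case (Suc d)
  have Md: "M ^\<^sub>m d \<in> carrier_mat n n" using M by simp
  have column: "(\<Sum>k<n. M $$ (k, j) * z $ k) = l * z $ j" if "j < n" for j
  proof -
    have "(transpose_mat M *\<^sub>v z) $ j = (\<Sum>k<n. M $$ (k, j) * z $ k)"
      by (rule index_transpose_mult_mat_vec_sum[OF M z that])
    thus ?thesis using zev z that by simp
  qed
  have "(\<Sum>i<n. z $ i * (M ^\<^sub>m Suc d) $$ (i, j))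
      = (\<Sum>i<n. \<Sum>k<n. z $ i * (M ^\<^sub>m d) $$ (i, k) * M $$ (k, j))"
    using Suc.prems by (simp add: index_mult_mat_sum[OF Md M] sum_distrib_left mult.assoc)
  also have "\<dots> = (\<Sum>k<n. (\<Sum>i<n. z $ i * (M ^\<^sub>m d) $$ (i, k)) * M $$ (k, j))"
    by (subst sum.swap) (simp add: sum_distrib_right)
  also have "\<dots> = (\<Sum>k<n. l ^ d * (M $$ (k, j) * z $ k))"
    by (intro sum.cong) (simp_all add: Suc.IH)
  also have "\<dots> = l ^ Suc d * z $ j"
    using Suc.prems by (simp add: sum_distrib_left[symmetric] column)
  finally show ?case .
qed

lemma mult_poly_mat_cofactor:
  fixes M :: "real mat"
  assumes M: "M \<in> carrier_mat n n" and g: "char_poly M = [:-l, 1:] * g"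
  shows "M * poly_mat g M = l \<cdot>\<^sub>m poly_mat g M"
proof (rule eq_matI)
  define D where "D = Suc (degree g)"
  have G: "poly_mat g M \<in> carrier_mat n n" using M by (simp add: poly_mat_def)
  have G_entry: "poly_mat g M $$ (i, j) = (\<Sum>d<D. coeff g d * (M ^\<^sub>m d) $$ (i, j))" if "i < n" "j < n" for i j
    by (rule poly_mat_index_lessThan) (use that M in \<open>auto simp: D_def\<close>)
  have "char_poly M \<noteq> 0" using degree_monic_char_poly[OF M] by auto
  hence "degree (char_poly M) = D" unfolding g D_def by (subst degree_mult_eq) auto
  fix i j assume "i < dim_row (l \<cdot>\<^sub>m poly_mat g M)" "j < dim_col (l \<cdot>\<^sub>m poly_mat g M)"
  hence ij: "i < n" "j < n" using G by auto
  have "0 = poly_mat (char_poly M) M $$ (i, j)" using cayley_hamilton[OF M] ij by simp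
  also have "\<dots> = (\<Sum>d<Suc D. coeff (char_poly M) d * (M ^\<^sub>m d) $$ (i, j))"
    by (rule poly_mat_index_lessThan) (use ij M \<open>degree (char_poly M) = D\<close> in auto)
  also have "\<dots> = (\<Sum>d<Suc D. (if d = 0 then 0 else coeff g (d - 1)) * (M ^\<^sub>m d) $$ (i, j))
      - l * (\<Sum>d<Suc D. coeff g d * (M ^\<^sub>m d) $$ (i, j))"
    unfolding g coeff_mult_monic_linear
    by (simp add: sum_subtractf left_diff_distrib sum_distrib_left mult.assoc distrib_left)
  also have "(\<Sum>d<Suc D. (if d = 0 then 0 else coeff g (d - 1)) * (M ^\<^sub>m d) $$ (i, j))
      = (\<Sum>d<D. coeff g d * (M ^\<^sub>m Suc d) $$ (i, j))"
    unfolding sum.lessThan_Suc_shift by simp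
  also have "(\<Sum>d<Suc D. coeff g d * (M ^\<^sub>m d) $$ (i, j)) = poly_mat g M $$ (i, j)"
    by (simp add: G_entry ij D_def coeff_eq_0)
  also have "(\<Sum>d<D. coeff g d * (M ^\<^sub>m Suc d) $$ (i, j)) = (M * poly_mat g M) $$ (i, j)"
  proof -
    have "(M * poly_mat g M) $$ (i, j) = (\<Sum>k<n. \<Sum>d<D. coeff g d * (M $$ (i, k) * (M ^\<^sub>m d) $$ (k, j)))"
      using ij by (simp add: index_mult_mat_sum[OF M G ij] G_entry sum_distrib_left mult_ac)
    also have "\<dots> = (\<Sum>d<D. coeff g d * (\<Sum>k<n. M $$ (i, k) * (M ^\<^sub>m d) $$ (k, j)))"
      by (subst sum.swap) (simp add: sum_distrib_left)
    also have "\<dots> = (\<Sum>d<D. coeff g d * (M ^\<^sub>m Suc d) $$ (i, j))"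
      using ij by (intro sum.cong refl)
        (simp only: pow_mat_Suc_left[OF M] index_mult_mat_sum[OF M pow_carrier_mat[OF M]])
    finally show ?thesis by simp
  qed
  finally show "(M * poly_mat g M) $$ (i, j) = (l \<cdot>\<^sub>m poly_mat g M) $$ (i, j)"
    using ij G by simp
qed (use M in \<open>simp_all add: poly_mat_def\<close>)

lemma poly_mat_smult_index:
  "i < dim_row M \<Longrightarrow> j < dim_row M \<Longrightarrow>
    poly_mat (Polynomial.smult c f) M $$ (i, j) = c * poly_mat f M $$ (i, j)"
  using poly_mat_index_lessThan[of "Polynomial.smult c f" "Suc (degree f)" i M j]
    poly_mat_index_lessThan[of f "Suc (degree f)" i M j] degree_smult_le[of c f]
  by (simp add: sum_distrib_left distrib_left mult.assoc)

lemma left_eigenvector_poly_mat: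
  fixes M :: "real mat"
  assumes M: "M \<in> carrier_mat n n" and z: "z \<in> carrier_vec n"
    and zev: "transpose_mat M *\<^sub>v z = l \<cdot>\<^sub>v z" and j: "j < n"
  shows "(\<Sum>i<n. z $ i * poly_mat f M $$ (i, j)) = poly f l * z $ j"
proof -
  define D where "D = Suc (degree f)"
  have "(\<Sum>i<n. z $ i * poly_mat f M $$ (i, j)) = (\<Sum>i<n. \<Sum>d<D. coeff f d * (z $ i * (M ^\<^sub>m d) $$ (i, j)))"
    using j M by (intro sum.cong refl)
      (simp add: poly_mat_index_lessThan[where D = D] D_def sum_distrib_left distrib_left mult_ac)
  also have "\<dots> = (\<Sum>d<D. coeff f d * (\<Sum>i<n. z $ i * (M ^\<^sub>m d) $$ (i, j)))"
    by (subst sum.swap) (simp add: sum_distrib_left)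
  also have "\<dots> = (\<Sum>d<D. coeff f d * (l ^ d * z $ j))"
    by (simp add: left_eigenvector_pow_mat[OF M z zev j])
  also have "\<dots> = (\<Sum>d<D. coeff f d * l ^ d) * z $ j"
    by (simp add: sum_distrib_right mult.assoc)
  also have "(\<Sum>d<D. coeff f d * l ^ d) = poly f l"
    unfolding poly_altdef D_def lessThan_Suc_atMost ..
  finally show ?thesis .
qed

lemma simple_root_cofactor:
  fixes p :: "'a :: idom poly"
  assumes p: "p \<noteq> 0" and simple: "order l p = 1"
  obtains g where "p = [:-l, 1:] * g" and "poly g l \<noteq> 0"
proof -
  have "poly p l = 0" using p simple by (simp add: order_root)
  then obtain g where g: "p = [:-l, 1:] * g" by (auto simp: poly_eq_0_iff_dvd)
  have "order l p = order l [:-l, 1:] + order l g"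
    unfolding g by (rule order_mult) (use p g in simp)
  hence "order l g = 0" using simple by simp
  moreover have "g \<noteq> 0" using p g by auto
  ultimately have "poly g l \<noteq> 0" by (simp add: order_root)
  with g show ?thesis by (rule that)
qed

(* The columns of g(M) lie in the eigenspace, which is the line through w, and its rows are
   proportional to z. *)
lemma poly_mat_cofactor_rank_one:
  fixes M :: "real mat"
  assumes M: "M \<in> carrier_mat (Suc n) (Suc n)" and simple: "simple_eigenvalue M l"
    and g: "char_poly M = [:-l, 1:] * g"
    and w: "w \<in> carrier_vec (Suc n)" "w $ 0 \<noteq> 0" "M *\<^sub>v w = l \<cdot>\<^sub>v w"
    and z: "z \<in> carrier_vec (Suc n)" "transpose_mat M *\<^sub>v z = l \<cdot>\<^sub>v z" and zw: "z \<bullet> w \<noteq> 0"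
    and ij: "i < Suc n" "j < Suc n"
  shows "poly_mat g M $$ (i, j) = poly g l / (z \<bullet> w) * (w $ i * z $ j)"
proof -
  define G where "G = poly_mat g M"
  have G: "G \<in> carrier_mat (Suc n) (Suc n)" using M by (simp add: G_def poly_mat_def)
  have G_col: "G $$ (p, j) = G $$ (0, j) / w $ 0 * w $ p" if "p < Suc n" for p
  proof -
    have "M *\<^sub>v col G j = col (M * G) j" by (rule col_mult2[symmetric, OF M G ij(2)])
    also have "\<dots> = l \<cdot>\<^sub>v col G j"
      using mult_poly_mat_cofactor[OF M g] G ij by (intro eq_vecI) (simp_all add: G_def)
    moreover have "col G j \<in> carrier_vec (Suc n)" using G ij(2) by auto
    ultimately have "col G j = (col G j $ 0 / w $ 0) \<cdot>\<^sub>v w"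
      using eigenvector_proportional_if_simple[of M n w l "col G j"] M w simple
      by (simp add: simple_eigenvalue_def)
    hence "col G j $ p = ((col G j $ 0 / w $ 0) \<cdot>\<^sub>v w) $ p" by (rule arg_cong[where f = "\<lambda>x. x $ p"])
    also have "\<dots> = col G j $ 0 / w $ 0 * w $ p" using that w(1) by simp
    finally show ?thesis using that ij G by simp
  qed
  have zw_sum: "z \<bullet> w = (\<Sum>p<Suc n. z $ p * w $ p)" using w(1) by (simp add: scalar_prod_def atLeast0LessThan)
  have "G $$ (0, j) / w $ 0 * (z \<bullet> w) = (\<Sum>p<Suc n. z $ p * G $$ (p, j))"
    unfolding zw_sum sum_distrib_left
  proof (rule sum.cong[OF refl])
    fix p assume "p \<in> {..<Suc n}"
    hence "G $$ (p, j) = G $$ (0, j) / w $ 0 * w $ p" by (intro G_col) simp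
    thus "G $$ (0, j) / w $ 0 * (z $ p * w $ p) = z $ p * G $$ (p, j)" by simp
  qed
  also have "\<dots> = poly g l * z $ j"
    unfolding G_def by (rule left_eigenvector_poly_mat[OF M z ij(2)])
  finally have G_0: "G $$ (0, j) / w $ 0 = poly g l * z $ j / (z \<bullet> w)" using zw by (simp add: field_simps)
  have "G $$ (i, j) = G $$ (0, j) / w $ 0 * w $ i" by (rule G_col[OF ij(1)])
  also have "\<dots> = poly g l * z $ j / (z \<bullet> w) * w $ i" unfolding G_0 ..
  finally show ?thesis unfolding G_def by simp
qed

theorem algebraically_positive_if_positive_eigenvectors:
  fixes M :: "real mat"
  assumes M: "M \<in> carrier_mat n n" and n: "0 < n" and simple: "simple_eigenvalue M l"
    and w: "w \<in> carrier_vec n" and w_pos: "\<forall>i<n. w $ i > 0" and Mw: "M *\<^sub>v w = l \<cdot>\<^sub>v w"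
    and z: "z \<in> carrier_vec n" and z_pos: "\<forall>i<n. z $ i > 0" and zM: "transpose_mat M *\<^sub>v z = l \<cdot>\<^sub>v z"
  shows "algebraically_positive M"
proof -
  obtain n' where n': "n = Suc n'" using n by (cases n) auto
  have "char_poly M \<noteq> 0" using degree_monic_char_poly[OF M] by auto
  then obtain g where g: "char_poly M = [:-l, 1:] * g" and g_l: "poly g l \<noteq> 0"
    using simple by (auto simp: simple_eigenvalue_def elim: simple_root_cofactor)
  have "z \<bullet> w = (\<Sum>i<n. z $ i * w $ i)" using w by (simp add: scalar_prod_def atLeast0LessThan)
  also have "\<dots> > 0" by (rule sum_pos) (use n w_pos z_pos in auto)
  finally have zw: "z \<bullet> w > 0" .
  have w0: "w $ 0 \<noteq> 0" using w_pos[rule_format, OF n] by simp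
  show ?thesis unfolding algebraically_positive_def
  proof (intro exI[of _ "Polynomial.smult (1 / poly g l) g"] allI impI)
    fix i j assume "i < dim_row M" "j < dim_row M"
    hence ij: "i < n" "j < n" using M by auto
    have "poly_mat g M $$ (i, j) = poly g l / (z \<bullet> w) * (w $ i * z $ j)"
      using poly_mat_cofactor_rank_one[of M n' l g w z i j] M simple g w w0 Mw z zM zw ij n'
      by simp
    hence "poly_mat (Polynomial.smult (1 / poly g l) g) M $$ (i, j) = w $ i * z $ j / (z \<bullet> w)"
      using ij M g_l by (simp add: poly_mat_smult_index)
    thus "poly_mat (Polynomial.smult (1 / poly g l) g) M $$ (i, j) > 0" using zw w_pos z_pos ij by simp
  qed
qed

subsection \<open>Matrices bordering A\<close>

lemma sum_lessThan_add: "(\<Sum>q<m + n. f q) = (\<Sum>q<m. f q) + (\<Sum>q<n. f (m + q :: nat))"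
  by (induction n) (simp_all add: add.assoc)

lemma eq_vec_split_indexI:
  assumes "x \<in> carrier_vec (m + n)" "y \<in> carrier_vec (m + n)"
    and "\<And>p. p < m \<Longrightarrow> x $ p = y $ p" and "\<And>i. i < n \<Longrightarrow> x $ (m + i) = y $ (m + i)"
  shows "x = y"
proof (rule eq_vecI)
  fix p assume "p < dim_vec y"
  hence "p < m \<or> (p = m + (p - m) \<and> p - m < n)" using assms(2) by auto
  thus "x $ p = y $ p" using assms(3,4) by metis
qed (use assms(1,2) in simp)

lemma sum_tail_reindex:
  fixes k n :: nat
  assumes "1 \<le> k"
  shows "(\<Sum>i = 1..n - k. f (k + i - 1)) = (\<Sum>i\<in>{k..<n}. f i)"
  by (rule sum.reindex_bij_witness[of _ "\<lambda>i. i + 1 - k" "\<lambda>i. k + i - 1"]) (use assms in auto)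

lemma sum_if_le_eq_sum_atLeastLessThan:
  "(\<Sum>i<n. if k \<le> i then f i else 0) = (\<Sum>i\<in>{k..<n}. f (i :: nat))"
proof -
  have "{i \<in> {..<n}. k \<le> i} = {k..<n}" by auto
  thus ?thesis using sum.inter_filter[of "{..<n}" f "\<lambda>i. k \<le> i"] by simp
qed

lemma index_mkvec_top: "p < m \<Longrightarrow> mkvec m n \<zeta> x $ p = \<zeta> (Suc p)"
  by (simp add: mkvec_def)

lemma index_mkvec_top_pred: "1 \<le> p \<Longrightarrow> p \<le> m \<Longrightarrow> mkvec m n \<zeta> x $ (p - 1) = \<zeta> p"
  by (cases p) (simp_all add: mkvec_def)

lemma index_mkvec_bottom: "i < n \<Longrightarrow> mkvec m n \<zeta> x $ (m + i) = x $ i"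
  by (simp add: mkvec_def)

lemma mkvec_carrier: "mkvec m n \<zeta> x \<in> carrier_vec (m + n)"
  by (simp add: mkvec_def)

lemma dim_vec_mkvec [simp]: "dim_vec (mkvec m n \<zeta> x) = m + n"
  by (simp add: mkvec_def)

lemma mkvec_pos:
  assumes "\<And>p. 1 \<le> p \<Longrightarrow> p \<le> m \<Longrightarrow> \<zeta> p > 0" and "\<forall>i<n. x $ i > 0" and "i < m + n"
  shows "mkvec m n \<zeta> x $ i > 0"
  using assms by (simp add: mkvec_def)

lemma vec_last_mkvec: "x \<in> carrier_vec n \<Longrightarrow> vec_last (mkvec m n \<zeta> x) n = x"
  by (intro eq_vecI) (simp_all add: vec_last_def mkvec_def)

(* All three matrices of the theorem have this shape outside the retained entries of A (1-based
   indices): weights alpha p on the superdiagonal of the leading m x m block, one further weight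
   beta at (r, sigma), mu at (m, m + j), a_{1j} at (m + 1, 1), and the entries a_{p-m,j} with
   p > m + k of the j-th column of A moved to column sigma. *)
definition border_entry :: "real mat \<Rightarrow> nat \<Rightarrow> nat \<Rightarrow> nat \<Rightarrow> nat \<Rightarrow> (nat \<Rightarrow> real) \<Rightarrow> real \<Rightarrow> nat \<Rightarrow> nat
    \<Rightarrow> real \<Rightarrow> nat \<Rightarrow> nat \<Rightarrow> real" where
  "border_entry A m n j k \<alpha> \<beta> r \<sigma> \<mu> p q =
    (if p \<le> m \<and> q \<le> m then (if q = Suc p then \<alpha> p else 0) + (if p = r \<and> q = \<sigma> then \<beta> else 0)
     else if p \<le> m then (if p = m \<and> q = m + j then \<mu> else 0)
     else if q \<le> m then (if p = m + 1 \<and> q = 1 then A $$ (0, j - 1)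
       else if q = \<sigma> \<and> m + k + 1 \<le> p then A $$ (p - m - 1, j - 1) else 0)
     else 0)"

lemma mkB_cong:
  assumes "\<And>p q. 1 \<le> p \<Longrightarrow> p \<le> m + n \<Longrightarrow> 1 \<le> q \<Longrightarrow> q \<le> m + n
      \<Longrightarrow> \<not> (m < p \<and> m < q \<and> \<not> inE m n j k p q) \<Longrightarrow> tp p q = tp' p q"
  shows "mkB A m n j k tp = mkB A m n j k tp'"
  using assms by (intro eq_matI) (auto simp: mkB_def Let_def)

locale extension_data =
  fixes A :: "real mat" and m n j k :: nat and l c :: real and u v :: "real vec"
  assumes A: "A \<in> carrier_mat n n" and m: "1 \<le> m" and j: "1 \<le> j" "j \<le> n" and k: "1 \<le> k"
    and a_pos: "A $$ (0, j - 1) > 0" and l_pos: "l > 0" and simple: "simple_eigenvalue A l"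
    and u: "u \<in> carrier_vec n" "\<forall>i<n. u $ i > 0" "A *\<^sub>v u = l \<cdot>\<^sub>v u"
    and v: "v \<in> carrier_vec n" "\<forall>i<n. v $ i > 0" "transpose_mat A *\<^sub>v v = l \<cdot>\<^sub>v v"
    and c: "c = A $$ (0, j - 1) * v $ 0 + (\<Sum>i\<in>{k..<n}. A $$ (i, j - 1) * v $ i)"
    and c_pos: "c > 0"
begin

abbreviation w :: "real vec" where "w \<equiv> mkvec m n (\<lambda>_. u $ (j - 1)) u"

lemma j_less: "j - 1 < n"
  using j by simp

lemma u_0: "u $ 0 \<noteq> 0"
  using u(2) j by auto

lemma av_pos: "A $$ (0, j - 1) * v $ 0 > 0"
  using a_pos v j by simp

end

locale bordered = extension_data +
  fixes \<alpha> :: "nat \<Rightarrow> real" and \<beta> \<mu> :: real and r \<sigma> :: nat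
  assumes r: "1 \<le> r" "r \<le> m" and \<sigma>: "1 \<le> \<sigma>" "\<sigma> \<le> m"
begin

lemma \<sigma>_less: "\<sigma> - 1 < m" and r_less: "r - 1 < m"
  using \<sigma> r by simp_all

abbreviation B :: "real mat" where "B \<equiv> mkB A m n j k (border_entry A m n j k \<alpha> \<beta> r \<sigma> \<mu>)"

lemma B_carrier: "B \<in> carrier_mat (m + n) (m + n)"
  by (simp add: mkB_def)

lemma B_top_left: "p < m \<Longrightarrow> q < m \<Longrightarrow>
    B $$ (p, q) = (if q = Suc p then \<alpha> (Suc p) else 0) + (if Suc p = r \<and> Suc q = \<sigma> then \<beta> else 0)"
  by (simp add: mkB_def border_entry_def)

lemma B_top_right: "p < m \<Longrightarrow> m \<le> q \<Longrightarrow> q < m + n \<Longrightarrow>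
    B $$ (p, q) = (if Suc p = m \<and> q = m + j - 1 then \<mu> else 0)"
  using j by (auto simp: mkB_def border_entry_def)

lemma B_bottom_left: "m \<le> p \<Longrightarrow> p < m + n \<Longrightarrow> q < m \<Longrightarrow>
    B $$ (p, q) = (if p = m \<and> q = 0 then A $$ (0, j - 1) else 0)
      + (if Suc q = \<sigma> \<and> m + k \<le> p then A $$ (p - m, j - 1) else 0)"
  using k by (auto simp: mkB_def border_entry_def)

lemma B_bottom_right: "m \<le> p \<Longrightarrow> p < m + n \<Longrightarrow> m \<le> q \<Longrightarrow> q < m + n \<Longrightarrow>
    B $$ (p, q) = (if q = m + j - 1 \<and> (p = m \<or> m + k \<le> p) then 0 else A $$ (p - m, q - m))"
  using j by (auto simp: mkB_def border_entry_def inE_def)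

(* For 1-based p, q \<le> m: top_row x y p is entry p of B times a vector with leading entries
   x 1, ..., x m and entry y at position m + j; top_col z q is entry q of z^T times the leading
   m x m block of B. *)
definition top_row :: "(nat \<Rightarrow> real) \<Rightarrow> real \<Rightarrow> nat \<Rightarrow> real" where
  "top_row x y p = (if p < m then \<alpha> p * x (Suc p) else 0) + (if p = r then \<beta> * x \<sigma> else 0)
    + (if p = m then \<mu> * y else 0)"

definition top_col :: "(nat \<Rightarrow> real) \<Rightarrow> nat \<Rightarrow> real" where
  "top_col \<zeta> q = (if 2 \<le> q then \<alpha> (q - 1) * \<zeta> (q - 1) else 0) + (if q = \<sigma> then \<beta> * \<zeta> r else 0)"

lemma B_mult_vec_top:
  assumes x: "x \<in> carrier_vec (m + n)" and p: "p < m"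
  shows "(B *\<^sub>v x) $ p = top_row (\<lambda>i. x $ (i - 1)) (x $ (m + j - 1)) (Suc p)"
proof -
  have "(B *\<^sub>v x) $ p = (\<Sum>q<m. B $$ (p, q) * x $ q) + (\<Sum>q<n. B $$ (p, m + q) * x $ (m + q))"
    using p by (simp add: index_mult_mat_vec_sum[OF B_carrier x] sum_lessThan_add)
  also have "(\<Sum>q<m. B $$ (p, q) * x $ q)
      = (\<Sum>q<m. (if q = Suc p then \<alpha> (Suc p) * x $ q else 0)
          + (if q = \<sigma> - 1 then (if Suc p = r then \<beta> else 0) * x $ q else 0))"
    using p \<sigma> by (intro sum.cong) (auto simp: B_top_left distrib_right)
  also have "\<dots> = (if Suc p < m then \<alpha> (Suc p) * x $ Suc p else 0) + (if Suc p = r then \<beta> * x $ (\<sigma> - 1) else 0)"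
    using \<sigma>_less by (simp add: sum.distrib sum.delta')
  also have "(\<Sum>q<n. B $$ (p, m + q) * x $ (m + q))
      = (\<Sum>q<n. if q = j - 1 then (if Suc p = m then \<mu> else 0) * x $ (m + q) else 0)"
    using p j by (intro sum.cong) (auto simp: B_top_right)
  also have "\<dots> = (if Suc p = m then \<mu> * x $ (m + j - 1) else 0)"
    using j j_less by (simp add: sum.delta')
  finally show ?thesis by (simp add: top_row_def)
qed

lemma B_mult_vec_bottom:
  assumes x: "x \<in> carrier_vec (m + n)" and i: "i < n"
  shows "(B *\<^sub>v x) $ (m + i) = (A *\<^sub>v vec_last x n) $ i
    + (if i = 0 then A $$ (0, j - 1) * (x $ 0 - x $ (m + j - 1)) else 0)
    + (if k \<le> i then A $$ (i, j - 1) * (x $ (\<sigma> - 1) - x $ (m + j - 1)) else 0)"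
proof -
  have "(B *\<^sub>v x) $ (m + i) = (\<Sum>q<m. B $$ (m + i, q) * x $ q) + (\<Sum>q<n. B $$ (m + i, m + q) * x $ (m + q))"
    using i by (simp add: index_mult_mat_vec_sum[OF B_carrier x] sum_lessThan_add)
  also have "(\<Sum>q<m. B $$ (m + i, q) * x $ q)
      = (\<Sum>q<m. (if q = 0 then (if i = 0 then A $$ (0, j - 1) else 0) * x $ q else 0)
          + (if q = \<sigma> - 1 then (if k \<le> i then A $$ (i, j - 1) else 0) * x $ q else 0))"
    using i \<sigma> by (intro sum.cong) (auto simp: B_bottom_left)
  also have "\<dots> = (if i = 0 then A $$ (0, j - 1) * x $ 0 else 0) + (if k \<le> i then A $$ (i, j - 1) * x $ (\<sigma> - 1) else 0)"
    using \<sigma>_less m by (simp add: sum.distrib sum.delta')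
  also have "(\<Sum>q<n. B $$ (m + i, m + q) * x $ (m + q))
      = (\<Sum>q<n. A $$ (i, q) * x $ (m + q) - (if q = j - 1 then (if i = 0 \<or> k \<le> i then A $$ (i, q) else 0) * x $ (m + q) else 0))"
    using i j by (intro sum.cong) (auto simp: B_bottom_right)
  also have "\<dots> = (A *\<^sub>v vec_last x n) $ i - (if i = 0 \<or> k \<le> i then A $$ (i, j - 1) * x $ (m + j - 1) else 0)"
    using i j j_less x by (simp add: sum_subtractf sum.delta' index_mult_mat_vec_sum[OF A] vec_last_def)
  finally show ?thesis using k by (auto simp: algebra_simps)
qed

lemma transpose_B_mult_vec_top:
  assumes z: "z \<in> carrier_vec (m + n)" and q: "q < m"
  shows "(transpose_mat B *\<^sub>v z) $ q = top_col (\<lambda>i. z $ (i - 1)) (Suc q)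
    + (if q = 0 then A $$ (0, j - 1) * z $ m else 0)
    + (if Suc q = \<sigma> then (\<Sum>i\<in>{k..<n}. A $$ (i, j - 1) * z $ (m + i)) else 0)"
proof -
  have "(transpose_mat B *\<^sub>v z) $ q = (\<Sum>p<m. B $$ (p, q) * z $ p) + (\<Sum>i<n. B $$ (m + i, q) * z $ (m + i))"
    using q by (simp add: index_transpose_mult_mat_vec_sum[OF B_carrier z] sum_lessThan_add)
  also have "(\<Sum>p<m. B $$ (p, q) * z $ p)
      = (\<Sum>p<m. (if Suc p = q then \<alpha> q * z $ p else 0)
          + (if p = r - 1 then (if Suc q = \<sigma> then \<beta> else 0) * z $ p else 0))"
    using q r by (intro sum.cong) (auto simp: B_top_left distrib_right)
  also have "\<dots> = top_col (\<lambda>i. z $ (i - 1)) (Suc q)"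
    using q r_less by (cases q) (simp_all add: sum.distrib sum.delta' top_col_def)
  also have "(\<Sum>i<n. B $$ (m + i, q) * z $ (m + i))
      = (\<Sum>i<n. (if i = 0 then (if q = 0 then A $$ (0, j - 1) else 0) * z $ (m + i) else 0)
          + (if Suc q = \<sigma> then (if k \<le> i then A $$ (i, j - 1) * z $ (m + i) else 0) else 0))"
    using q by (intro sum.cong) (auto simp: B_bottom_left)
  also have "\<dots> = (if q = 0 then A $$ (0, j - 1) * z $ m else 0)
      + (if Suc q = \<sigma> then (\<Sum>i\<in>{k..<n}. A $$ (i, j - 1) * z $ (m + i)) else 0)"
    using j by (simp add: sum.distrib sum.delta' sum_if_le_eq_sum_atLeastLessThan)
  finally show ?thesis by simp
qed

lemma transpose_B_mult_vec_bottom: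
  assumes z: "z \<in> carrier_vec (m + n)" and q: "q < n"
  shows "(transpose_mat B *\<^sub>v z) $ (m + q) = (transpose_mat A *\<^sub>v vec_last z n) $ q
    + (if q = j - 1 then \<mu> * z $ (m - 1) - A $$ (0, j - 1) * z $ m - (\<Sum>i\<in>{k..<n}. A $$ (i, j - 1) * z $ (m + i))
       else 0)"
proof -
  have "(transpose_mat B *\<^sub>v z) $ (m + q) = (\<Sum>p<m. B $$ (p, m + q) * z $ p) + (\<Sum>i<n. B $$ (m + i, m + q) * z $ (m + i))"
    using q by (simp add: index_transpose_mult_mat_vec_sum[OF B_carrier z] sum_lessThan_add)
  also have "(\<Sum>p<m. B $$ (p, m + q) * z $ p) = (\<Sum>p<m. if p = m - 1 then (if q = j - 1 then \<mu> else 0) * z $ p else 0)"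
    using q j by (intro sum.cong) (auto simp: B_top_right)
  also have "\<dots> = (if q = j - 1 then \<mu> * z $ (m - 1) else 0)"
    using m by (simp add: sum.delta')
  also have "(\<Sum>i<n. B $$ (m + i, m + q) * z $ (m + i))
      = (\<Sum>i<n. A $$ (i, q) * z $ (m + i)) - (if q = j - 1 then
          (\<Sum>i<n. (if i = 0 then A $$ (i, j - 1) * z $ (m + i) else 0) + (if k \<le> i then A $$ (i, j - 1) * z $ (m + i) else 0))
          else 0)"
    using q j k by (auto simp: B_bottom_right sum_subtractf[symmetric] intro!: sum.cong)
  also have "(\<Sum>i<n. A $$ (i, q) * z $ (m + i)) = (transpose_mat A *\<^sub>v vec_last z n) $ q"
    using q z by (simp add: index_transpose_mult_mat_vec_sum[OF A] vec_last_def)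
  finally show ?thesis
    using j by (simp add: sum.distrib sum.delta' sum_if_le_eq_sum_atLeastLessThan)
qed

lemma top_row_cong: "(\<And>i. 1 \<le> i \<Longrightarrow> i \<le> m \<Longrightarrow> x i = x' i) \<Longrightarrow> top_row x y p = top_row x' y p"
  using \<sigma> by (simp add: top_row_def)

lemma top_row_const: "top_row (\<lambda>_. y) y p = y * top_row (\<lambda>_. 1) 1 p"
  by (simp add: top_row_def algebra_simps)

lemma top_col_cong: "(\<And>i. 1 \<le> i \<Longrightarrow> i \<le> m \<Longrightarrow> \<zeta> i = \<zeta>' i) \<Longrightarrow> q \<le> m \<Longrightarrow> top_col \<zeta> q = top_col \<zeta>' q"
  using r by (simp add: top_col_def)

lemma B_mult_w:
  assumes row_sum: "\<And>p. 1 \<le> p \<Longrightarrow> p \<le> m \<Longrightarrow> top_row (\<lambda>_. 1) 1 p = l"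
  shows "B *\<^sub>v w = l \<cdot>\<^sub>v w"
proof -
  have w_j: "w $ (m + j - 1) = u $ (j - 1)"
    using j j_less index_mkvec_bottom[of "j - 1" n m _ u] by simp
  have w_0: "w $ 0 = u $ (j - 1)" and w_\<sigma>: "w $ (\<sigma> - 1) = u $ (j - 1)"
    using m \<sigma>_less by (simp_all add: index_mkvec_top)
  show ?thesis
  proof (rule eq_vec_split_indexI)
    fix p assume p: "p < m"
    have "(B *\<^sub>v w) $ p = top_row (\<lambda>i. w $ (i - 1)) (u $ (j - 1)) (Suc p)"
      unfolding B_mult_vec_top[OF mkvec_carrier p] w_j ..
    also have "\<dots> = top_row (\<lambda>_. u $ (j - 1)) (u $ (j - 1)) (Suc p)"
      by (rule top_row_cong) (auto simp: mkvec_def)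
    also have "\<dots> = u $ (j - 1) * l"
      unfolding top_row_const[of "u $ (j - 1)"] using p row_sum[of "Suc p"] by simp
    finally show "(B *\<^sub>v w) $ p = (l \<cdot>\<^sub>v w) $ p"
      using p by (simp add: index_mkvec_top)
  next
    fix i assume i: "i < n"
    show "(B *\<^sub>v w) $ (m + i) = (l \<cdot>\<^sub>v w) $ (m + i)"
      using i u unfolding B_mult_vec_bottom[OF mkvec_carrier i] w_0 w_\<sigma> w_j vec_last_mkvec[OF u(1)]
      by (simp add: index_mkvec_bottom)
  qed (use B_carrier in \<open>simp_all add: mkvec_carrier\<close>)
qed

lemma transpose_B_mult_z:
  assumes left_top: "\<And>q. 1 \<le> q \<Longrightarrow> q \<le> m \<Longrightarrow> top_col \<zeta> q + (if q = 1 then A $$ (0, j - 1) * v $ 0 else 0)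
      + (if q = \<sigma> then c - A $$ (0, j - 1) * v $ 0 else 0) = l * \<zeta> q"
    and corner: "\<mu> * \<zeta> m = c"
  shows "transpose_mat B *\<^sub>v mkvec m n \<zeta> v = l \<cdot>\<^sub>v mkvec m n \<zeta> v"
proof (rule eq_vec_split_indexI)
  have tail: "(\<Sum>i\<in>{k..<n}. A $$ (i, j - 1) * mkvec m n \<zeta> v $ (m + i)) = c - A $$ (0, j - 1) * v $ 0"
    using c by (simp add: index_mkvec_bottom)
  have z_m: "mkvec m n \<zeta> v $ m = v $ 0" using j index_mkvec_bottom[of 0 n m \<zeta> v] by simp
  fix q assume q: "q < m"
  have "top_col (\<lambda>i. mkvec m n \<zeta> v $ (i - 1)) (Suc q) = top_col \<zeta> (Suc q)"
    using q by (intro top_col_cong) (auto simp: mkvec_def)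
  hence "(transpose_mat B *\<^sub>v mkvec m n \<zeta> v) $ q = top_col \<zeta> (Suc q)
      + (if Suc q = 1 then A $$ (0, j - 1) * v $ 0 else 0) + (if Suc q = \<sigma> then c - A $$ (0, j - 1) * v $ 0 else 0)"
    unfolding transpose_B_mult_vec_top[OF mkvec_carrier q] tail z_m by simp
  also have "\<dots> = l * \<zeta> (Suc q)" by (rule left_top) (use q in simp_all)
  finally show "(transpose_mat B *\<^sub>v mkvec m n \<zeta> v) $ q = (l \<cdot>\<^sub>v mkvec m n \<zeta> v) $ q"
    using q by (simp add: index_mkvec_top mkvec_carrier)
next
  have tail: "(\<Sum>i\<in>{k..<n}. A $$ (i, j - 1) * mkvec m n \<zeta> v $ (m + i)) = c - A $$ (0, j - 1) * v $ 0"
    using c by (simp add: index_mkvec_bottom)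
  have z_m: "mkvec m n \<zeta> v $ m = v $ 0" using j index_mkvec_bottom[of 0 n m \<zeta> v] by simp
  have z_top: "mkvec m n \<zeta> v $ (m - 1) = \<zeta> m" by (rule index_mkvec_top_pred) (use m in simp_all)
  fix q assume q: "q < n"
  have "(transpose_mat B *\<^sub>v mkvec m n \<zeta> v) $ (m + q) = (transpose_mat A *\<^sub>v v) $ q"
    unfolding transpose_B_mult_vec_bottom[OF mkvec_carrier q] tail z_m z_top vec_last_mkvec[OF v(1)] corner by simp
  thus "(transpose_mat B *\<^sub>v mkvec m n \<zeta> v) $ (m + q) = (l \<cdot>\<^sub>v mkvec m n \<zeta> v) $ (m + q)"
    using q v by (simp add: index_mkvec_bottom)
qed (use B_carrier in \<open>simp_all add: mkvec_carrier\<close>)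

lemma border_column_sum:
  assumes "\<sigma> \<noteq> Suc r"
  shows "B $$ (r - 1, \<sigma> - 1) * mkvec m n \<zeta> v $ (r - 1)
      + (\<Sum>i = 1..n - k. B $$ (m + k + i - 1, \<sigma> - 1) * mkvec m n \<zeta> v $ (m + k + i - 1))
    = \<beta> * \<zeta> r + (c - A $$ (0, j - 1) * v $ 0)"
proof -
  have "B $$ (r - 1, \<sigma> - 1) = \<beta>" using assms r \<sigma> by (auto simp: B_top_left)
  moreover have "mkvec m n \<zeta> v $ (r - 1) = \<zeta> r" using r by (rule index_mkvec_top_pred)
  moreover have "(\<Sum>i = 1..n - k. B $$ (m + k + i - 1, \<sigma> - 1) * mkvec m n \<zeta> v $ (m + k + i - 1))
      = (\<Sum>i = 1..n - k. A $$ (k + i - 1, j - 1) * v $ (k + i - 1))"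
  proof (rule sum.cong)
    fix i assume "i \<in> {1..n - k}"
    then obtain p where p: "k + i - 1 = p" "m + k + i - 1 = m + p" "k \<le> p" "p < n" using k by force
    show "B $$ (m + k + i - 1, \<sigma> - 1) * mkvec m n \<zeta> v $ (m + k + i - 1) = A $$ (k + i - 1, j - 1) * v $ (k + i - 1)"
      unfolding p(1,2) using p(3,4) k \<sigma>_less \<sigma> by (simp add: B_bottom_left index_mkvec_bottom)
  qed simp
  ultimately show ?thesis using c sum_tail_reindex[OF k, of "\<lambda>i. A $$ (i, j - 1) * v $ i" n] by simp
qed

lemma B_eigenvector_top:
  assumes top_kernel: "\<And>x y p. (\<And>p. 1 \<le> p \<Longrightarrow> p \<le> m \<Longrightarrow> top_row x y p = l * x p)
      \<Longrightarrow> 1 \<le> p \<Longrightarrow> p \<le> m \<Longrightarrow> x p = y"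
    and x: "x \<in> carrier_vec (m + n)" and Bx: "B *\<^sub>v x = l \<cdot>\<^sub>v x" and p: "p < m"
  shows "x $ p = x $ (m + j - 1)"
proof -
  have rows: "top_row (\<lambda>i. x $ (i - 1)) (x $ (m + j - 1)) q = l * x $ (q - 1)" if q: "1 \<le> q" "q \<le> m" for q
  proof -
    obtain q' where q': "q = Suc q'" "q' < m" using q by (cases q) auto
    have "(B *\<^sub>v x) $ q' = l * x $ q'" using arg_cong[OF Bx, of "\<lambda>v. v $ q'"] q' x by simp
    thus ?thesis using B_mult_vec_top[OF x q'(2)] q'(1) by simp
  qed
  show ?thesis using top_kernel[of "\<lambda>i. x $ (i - 1)" "x $ (m + j - 1)" "Suc p", OF rows] p by simp
qed

lemma B_eigenspace:
  assumes top_kernel: "\<And>x y p. (\<And>p. 1 \<le> p \<Longrightarrow> p \<le> m \<Longrightarrow> top_row x y p = l * x p)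
      \<Longrightarrow> 1 \<le> p \<Longrightarrow> p \<le> m \<Longrightarrow> x p = y"
    and x: "x \<in> carrier_vec (m + n)" and Bx: "B *\<^sub>v x = l \<cdot>\<^sub>v x"
  shows "\<exists>a. x = a \<cdot>\<^sub>v w"
proof -
  have top: "x $ p = x $ (m + j - 1)" if "p < m" for p
    using top_kernel x Bx that by (rule B_eigenvector_top)
  define b where "b = vec_last x n"
  have b: "b \<in> carrier_vec n" by (simp add: b_def)
  have "A *\<^sub>v b = l \<cdot>\<^sub>v b"
  proof (rule eq_vecI)
    fix i assume "i < dim_vec (l \<cdot>\<^sub>v b)"
    hence i: "i < n" by (simp add: b_def)
    have "(A *\<^sub>v b) $ i = (B *\<^sub>v x) $ (m + i)"
      using B_mult_vec_bottom[OF x i] top[of 0] top[OF \<sigma>_less] m by (simp add: b_def)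
    thus "(A *\<^sub>v b) $ i = (l \<cdot>\<^sub>v b) $ i" using Bx i x by (simp add: b_def vec_last_def)
  qed (use A in \<open>simp add: b_def\<close>)
  moreover obtain n' where n': "n = Suc n'" using j by (cases n) auto
  ultimately have b_u: "b = (b $ 0 / u $ 0) \<cdot>\<^sub>v u"
    using eigenvector_proportional_if_simple[of A n' u l b] A u b simple u_0
    by (simp add: simple_eigenvalue_def)
  have x_bottom: "x $ (m + i) = b $ 0 / u $ 0 * u $ i" if "i < n" for i
  proof -
    have "x $ (m + i) = b $ i" using that x by (simp add: b_def vec_last_def)
    also have "\<dots> = b $ 0 / u $ 0 * u $ i" using arg_cong[OF b_u, of "\<lambda>x. x $ i"] that u by simp
    finally show ?thesis .
  qed
  have "x = (b $ 0 / u $ 0) \<cdot>\<^sub>v w"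
  proof (rule eq_vec_split_indexI)
    fix p assume "p < m"
    hence "x $ p = x $ (m + (j - 1))" using top j by simp
    thus "x $ p = ((b $ 0 / u $ 0) \<cdot>\<^sub>v w) $ p" using \<open>p < m\<close> x_bottom[OF j_less] by (simp add: index_mkvec_top)
  next
    fix i assume i: "i < n"
    show "x $ (m + i) = ((b $ 0 / u $ 0) \<cdot>\<^sub>v w) $ (m + i)"
      using x_bottom[OF i] i by (simp add: index_mkvec_bottom)
  qed (use x mkvec_carrier in simp_all)
  thus ?thesis ..
qed

theorem simple_and_algebraically_positive:
  assumes row_sum: "\<And>p. 1 \<le> p \<Longrightarrow> p \<le> m \<Longrightarrow> top_row (\<lambda>_. 1) 1 p = l"
    and top_kernel: "\<And>x y p. (\<And>p. 1 \<le> p \<Longrightarrow> p \<le> m \<Longrightarrow> top_row x y p = l * x p)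
      \<Longrightarrow> 1 \<le> p \<Longrightarrow> p \<le> m \<Longrightarrow> x p = y"
    and left_top: "\<And>q. 1 \<le> q \<Longrightarrow> q \<le> m \<Longrightarrow> top_col \<zeta> q + (if q = 1 then A $$ (0, j - 1) * v $ 0 else 0)
      + (if q = \<sigma> then c - A $$ (0, j - 1) * v $ 0 else 0) = l * \<zeta> q"
    and corner: "\<mu> * \<zeta> m = c"
    and \<zeta>_pos: "\<And>p. 1 \<le> p \<Longrightarrow> p \<le> m \<Longrightarrow> \<zeta> p > 0"
  shows "simple_eigenvalue B l \<and> B *\<^sub>v w = l \<cdot>\<^sub>v w
    \<and> transpose_mat B *\<^sub>v mkvec m n \<zeta> v = l \<cdot>\<^sub>v mkvec m n \<zeta> v \<and> algebraically_positive B"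
proof -
  let ?z = "mkvec m n \<zeta> v"
  have Bw: "B *\<^sub>v w = l \<cdot>\<^sub>v w" using row_sum by (rule B_mult_w)
  have Bz: "transpose_mat B *\<^sub>v ?z = l \<cdot>\<^sub>v ?z" using left_top corner by (rule transpose_B_mult_z)
  have w_pos: "\<forall>i<m + n. w $ i > 0" using u j_less by (auto intro: mkvec_pos)
  have z_pos: "\<forall>i<m + n. ?z $ i > 0" using \<zeta>_pos v by (auto intro: mkvec_pos)
  obtain N where N: "m + n = Suc N" using m by (cases "m + n") auto
  have "?z \<bullet> w = (\<Sum>i<m + n. ?z $ i * w $ i)" by (simp add: scalar_prod_def atLeast0LessThan)
  also have "\<dots> > 0" by (rule sum_pos) (use w_pos z_pos m in \<open>auto simp: lessThan_empty_iff\<close>)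
  finally have zw: "?z \<bullet> w > 0" .
  have line: "\<exists>a. x = a \<cdot>\<^sub>v w" if "x \<in> carrier_vec (m + n)" "B *\<^sub>v x = l \<cdot>\<^sub>v x" for x
    using top_kernel that by (rule B_eigenspace)
  have simple_B: "simple_eigenvalue B l"
    unfolding simple_eigenvalue_def
    using simple_if_eigenspace_line[of B N w l ?z] B_carrier mkvec_carrier[of m n] line Bw Bz zw N
      w_pos[rule_format, of 0]
    by simp
  have "algebraically_positive B"
    using algebraically_positive_if_positive_eigenvectors[OF B_carrier _ simple_B mkvec_carrier w_pos Bw mkvec_carrier z_pos Bz] m
    by simp
  with simple_B Bw Bz show ?thesis by simp
qed

end

lemma mkB_top2_eq:
  assumes j: "1 \<le> j" and k: "1 \<le> k" and s: "1 \<le> s" "s < m" and t: "1 \<le> t" "t \<le> m" "t \<noteq> s + 1"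
  shows "mkB A m n j k (top2 A l e m n j k s t)
    = mkB A m n j k (border_entry A m n j k (\<lambda>p. if p = s then e * l else l) ((1 - e) * l) s t l)"
proof (rule mkB_cong)
  fix p q assume pq: "1 \<le> p" "p \<le> m + n" "1 \<le> q" "q \<le> m + n"
  show "top2 A l e m n j k s t p q = border_entry A m n j k (\<lambda>p. if p = s then e * l else l) ((1 - e) * l) s t l p q"
  proof (cases "p \<le> m")
    case True
    thus ?thesis using pq j s t by (cases "q \<le> m") (auto simp: top2_def border_entry_def)
  next
    case False
    thus ?thesis using pq k s t by (cases "q \<le> m") (auto simp: top2_def border_entry_def)
  qed
qed

lemma mkB_top3_eq:
  assumes j: "1 \<le> j" and k: "1 \<le> k" and t: "1 \<le> t" "t \<le> m"
  shows "mkB A m n j k (top3 A l e m n j k t)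
    = mkB A m n j k (border_entry A m n j k (\<lambda>_. l) ((1 - e) * l) m t (e * l))"
proof (rule mkB_cong)
  fix p q assume pq: "1 \<le> p" "p \<le> m + n" "1 \<le> q" "q \<le> m + n"
  show "top3 A l e m n j k t p q = border_entry A m n j k (\<lambda>_. l) ((1 - e) * l) m t (e * l) p q"
  proof (cases "p \<le> m")
    case True
    thus ?thesis using pq j t by (cases "q \<le> m") (auto simp: top3_def border_entry_def)
  next
    case False
    thus ?thesis using pq k t by (cases "q \<le> m") (auto simp: top3_def border_entry_def)
  qed
qed

lemma exists_eps_both_pos:
  fixes a c :: real
  assumes "0 < a" "0 < c"
  obtains e where "0 < e" "e < 1" "c / e - a > 0" "c - e * a > 0"
proof
  show "0 < c / (c + a)" "c / (c + a) < 1" using assms by (simp_all add: field_simps)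
  show "c / (c / (c + a)) - a > 0" using assms by simp
  have "c - c / (c + a) * a = c * c / (c + a)" using assms by (simp add: field_simps)
  thus "c - c / (c + a) * a > 0" using assms by simp
qed

lemma chain_eq_last:
  assumes "\<And>p. a \<le> p \<Longrightarrow> p < b \<Longrightarrow> x (Suc p) = x p" and "a \<le> p" "p \<le> b"
  shows "x p = x b"
  using assms(3) by (induction p rule: inc_induct) (use assms(1,2) in auto)

lemma mkB_top1_eq:
  assumes j: "1 \<le> j" and k: "1 \<le> k" and s: "1 \<le> s" "s \<le> m"
  shows "mkB A m n j k (top1 A l m n j k s) = mkB A m n j k (border_entry A m n j k (\<lambda>_. l) 0 1 s l)"
proof (rule mkB_cong)
  fix p q assume pq: "1 \<le> p" "p \<le> m + n" "1 \<le> q" "q \<le> m + n"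
  show "top1 A l m n j k s p q = border_entry A m n j k (\<lambda>_. l) 0 1 s l p q"
  proof (cases "p \<le> m")
    case True
    thus ?thesis using pq j s by (cases "q \<le> m") (auto simp: top1_def border_entry_def)
  next
    case False
    thus ?thesis using pq k s by (cases "q \<le> m") (auto simp: top1_def border_entry_def)
  qed
qed

subsection \<open>The three extensions\<close>

lemma superdiagonal_split_kernel:
  fixes x :: "nat \<Rightarrow> real"
  assumes l: "0 < l" and e: "0 < e" and s: "1 \<le> s" "s < m" and t: "1 \<le> t" "t \<le> m" "t \<noteq> s + 1"
    and step: "\<And>q. 1 \<le> q \<Longrightarrow> q < m \<Longrightarrow> q \<noteq> s \<Longrightarrow> x (Suc q) = x q"
    and row_s: "e * l * x (Suc s) + (1 - e) * l * x t = l * x s" and x_m: "x m = y"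
    and p: "1 \<le> p" "p \<le> m"
  shows "x p = y"
proof -
  have upper: "x q = y" if "s + 1 \<le> q" "q \<le> m" for q
    using chain_eq_last[of "s + 1" m x q] step that x_m by simp
  have lower: "x q = x s" if "1 \<le> q" "q \<le> s" for q
    using chain_eq_last[of 1 s x q] step that s by simp
  have "x (Suc s) = y" using upper[of "Suc s"] s by simp
  moreover have "x t = (if t \<le> s then x s else y)" using lower[of t] upper[of t] t by auto
  ultimately have "e * l * (y - x s) = 0"
    using row_s by (cases "t \<le> s") (simp_all add: algebra_simps)
  hence "x s = y" using e l by simp
  thus "x p = y" using lower[of p] upper[of p] p by (cases "p \<le> s") auto
qed

context extension_data
begin

(* The first m entries (1-based) of the left eigenvector z in the three parts of the theorem. *)
definition shifted_column_weights :: "nat \<Rightarrow> nat \<Rightarrow> real" where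
  "shifted_column_weights s = (\<lambda>i. if i \<le> s - 1 then A $$ (0, j - 1) * v $ 0 / l else c / l)"

definition split_superdiagonal_weights :: "real \<Rightarrow> nat \<Rightarrow> nat \<Rightarrow> nat \<Rightarrow> real" where
  "split_superdiagonal_weights e s t = (\<lambda>i. if t \<le> s then
      (if i \<le> t - 1 then A $$ (0, j - 1) * v $ 0 / l else if i \<le> s then c / (e * l) else c / l)
    else (if i \<le> s then A $$ (0, j - 1) * v $ 0 / l else if i \<le> t - 1 then e * A $$ (0, j - 1) * v $ 0 / l
      else c / l))"

definition split_corner_weights :: "real \<Rightarrow> nat \<Rightarrow> nat \<Rightarrow> real" where
  "split_corner_weights e t = (\<lambda>i. if i \<le> t - 1 then A $$ (0, j - 1) * v $ 0 / l else c / (e * l))"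

lemma shifted_column_extension:
  assumes s: "1 \<le> s" "s \<le> m"
  defines "\<zeta> \<equiv> shifted_column_weights s"
  shows "simple_eigenvalue (mkB A m n j k (top1 A l m n j k s)) l
    \<and> mkB A m n j k (top1 A l m n j k s) *\<^sub>v w = l \<cdot>\<^sub>v w
    \<and> transpose_mat (mkB A m n j k (top1 A l m n j k s)) *\<^sub>v mkvec m n \<zeta> v = l \<cdot>\<^sub>v mkvec m n \<zeta> v
    \<and> algebraically_positive (mkB A m n j k (top1 A l m n j k s))"
proof -
  interpret P: bordered A m n j k l c u v "\<lambda>_. l" 0 l 1 s
    using s m by unfold_locales auto
  have B_eq: "mkB A m n j k (top1 A l m n j k s) = P.B" using j(1) k s by (rule mkB_top1_eq)
  have "simple_eigenvalue P.B l \<and> P.B *\<^sub>v w = l \<cdot>\<^sub>v w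
      \<and> transpose_mat P.B *\<^sub>v mkvec m n \<zeta> v = l \<cdot>\<^sub>v mkvec m n \<zeta> v \<and> algebraically_positive P.B"
  proof (rule P.simple_and_algebraically_positive)
    show "P.top_row (\<lambda>_. 1) 1 p = l" if "1 \<le> p" "p \<le> m" for p
      using that unfolding P.top_row_def by auto
  next
    fix x y p
    assume rows: "\<And>p. 1 \<le> p \<Longrightarrow> p \<le> m \<Longrightarrow> P.top_row x y p = l * x p" and p: "1 \<le> p" "p \<le> m"
    have "x (Suc q) = x q" if "1 \<le> q" "q < m" for q
      using rows[of q] that l_pos unfolding P.top_row_def by (auto split: if_split_asm)
    hence "x p = x m" using p by (rule chain_eq_last)
    also have "x m = y" using rows[of m] m l_pos unfolding P.top_row_def by (auto split: if_split_asm)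
    finally show "x p = y" .
  next
    fix q assume q: "1 \<le> q" "q \<le> m"
    have "P.top_col \<zeta> q + (if q = 1 then A $$ (0, j - 1) * v $ 0 else 0)
        = (if q \<le> s then A $$ (0, j - 1) * v $ 0 else c)"
      using q s l_pos unfolding P.top_col_def by (cases "q = 1") (auto simp: \<zeta>_def shifted_column_weights_def)
    moreover have "l * \<zeta> q = (if q < s then A $$ (0, j - 1) * v $ 0 else c)"
      using l_pos s by (auto simp: \<zeta>_def shifted_column_weights_def)
    ultimately show "P.top_col \<zeta> q + (if q = 1 then A $$ (0, j - 1) * v $ 0 else 0)
        + (if q = s then c - A $$ (0, j - 1) * v $ 0 else 0) = l * \<zeta> q"
      by auto
  next
    show "l * \<zeta> m = c" using s l_pos by (auto simp: \<zeta>_def shifted_column_weights_def)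
  next
    show "\<zeta> p > 0" for p using av_pos l_pos c_pos by (simp add: \<zeta>_def shifted_column_weights_def)
  qed
  thus ?thesis unfolding B_eq .
qed

lemma split_superdiagonal_weights_left_top:
  assumes s: "1 \<le> s" and t: "1 \<le> t" "t \<noteq> s + 1" and e: "0 < e" and q: "1 \<le> q"
  defines "\<zeta> \<equiv> split_superdiagonal_weights e s t" and "a \<equiv> A $$ (0, j - 1) * v $ 0"
  shows "(if 2 \<le> q then (if q - 1 = s then e * l else l) * \<zeta> (q - 1) else 0)
      + (if q = t then (1 - e) * l * \<zeta> s else 0) + (if q = 1 then a else 0) + (if q = t then c - a else 0)
    = l * \<zeta> q"
proof (cases "t \<le> s")
  case ts: True
  have \<zeta>_lo: "\<zeta> i = a / l" if "i < t" for i using that ts by (auto simp: \<zeta>_def a_def split_superdiagonal_weights_def)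
  have \<zeta>_mid: "\<zeta> i = c / (e * l)" if "t \<le> i" "i \<le> s" for i
    using that ts t by (auto simp: \<zeta>_def split_superdiagonal_weights_def)
  have \<zeta>_hi: "\<zeta> i = c / l" if "s < i" for i using that ts t by (auto simp: \<zeta>_def split_superdiagonal_weights_def)
  consider "q < t" | "q = t" | "t < q" "q \<le> s" | "q = s + 1" | "s + 1 < q" by linarith
  thus ?thesis
  proof cases
    case 1 thus ?thesis using q ts l_pos by (cases "q = 1") (simp_all add: \<zeta>_lo)
  next
    case 2 thus ?thesis using q ts e l_pos by (cases "q = 1") (simp_all add: \<zeta>_lo \<zeta>_mid field_simps)
  next
    case 3
    hence "2 \<le> q" "q - 1 \<noteq> s" "t \<le> q - 1" "q - 1 \<le> s" "q \<noteq> t" using t by auto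
    thus ?thesis using 3 by (simp add: \<zeta>_mid)
  next
    case 4 thus ?thesis using ts s e l_pos by (simp add: \<zeta>_mid \<zeta>_hi)
  next
    case 5 thus ?thesis using ts l_pos by (simp add: \<zeta>_hi)
  qed
next
  case st: False
  have \<zeta>_lo: "\<zeta> i = a / l" if "i \<le> s" for i using that st by (simp add: \<zeta>_def a_def split_superdiagonal_weights_def)
  have \<zeta>_mid: "\<zeta> i = e * a / l" if "s < i" "i < t" for i
    using that st by (auto simp: \<zeta>_def a_def split_superdiagonal_weights_def)
  have \<zeta>_hi: "\<zeta> i = c / l" if "t \<le> i" for i using that st t by (auto simp: \<zeta>_def split_superdiagonal_weights_def)
  consider "q \<le> s" | "q = s + 1" | "s + 1 < q" "q < t" | "q = t" | "t < q" using st by linarith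
  thus ?thesis
  proof cases
    case 1 thus ?thesis using q st l_pos by (cases "q = 1") (simp_all add: \<zeta>_lo)
  next
    case 2 thus ?thesis using st s t l_pos by (simp add: \<zeta>_lo \<zeta>_mid)
  next
    case 3 thus ?thesis using st l_pos by (simp add: \<zeta>_mid)
  next
    case 4 thus ?thesis using st s l_pos by (simp add: \<zeta>_lo \<zeta>_mid \<zeta>_hi field_simps)
  next
    case 5 thus ?thesis using st l_pos by (simp add: \<zeta>_hi)
  qed
qed

lemma split_superdiagonal_extension:
  assumes s: "1 \<le> s" "s \<le> m - 1" and t: "1 \<le> t" "t \<le> m" "t \<noteq> s + 1" and e: "0 < e" "e < 1"
  defines "\<zeta> \<equiv> split_superdiagonal_weights e s t" and "Bt \<equiv> mkB A m n j k (top2 A l e m n j k s t)"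
  shows "simple_eigenvalue Bt l \<and> Bt *\<^sub>v w = l \<cdot>\<^sub>v w
    \<and> transpose_mat Bt *\<^sub>v mkvec m n \<zeta> v = l \<cdot>\<^sub>v mkvec m n \<zeta> v \<and> algebraically_positive Bt
    \<and> Bt $$ (s - 1, t - 1) * mkvec m n \<zeta> v $ (s - 1)
      + (\<Sum>i = 1..n - k. Bt $$ (m + k + i - 1, t - 1) * mkvec m n \<zeta> v $ (m + k + i - 1))
      = (if t \<le> s then c / e - A $$ (0, j - 1) * v $ 0 else c - e * A $$ (0, j - 1) * v $ 0)"
proof -
  have s_less: "s < m" using s m by simp
  interpret P: bordered A m n j k l c u v "\<lambda>p. if p = s then e * l else l" "(1 - e) * l" l s t
    using s_less s t by unfold_locales auto
  have B_eq: "Bt = P.B" unfolding Bt_def using j(1) k s(1) s_less t by (rule mkB_top2_eq)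
  have \<zeta>_s: "\<zeta> s = (if t \<le> s then c / (e * l) else A $$ (0, j - 1) * v $ 0 / l)"
    using t by (auto simp: \<zeta>_def split_superdiagonal_weights_def)
  have "simple_eigenvalue P.B l \<and> P.B *\<^sub>v w = l \<cdot>\<^sub>v w
      \<and> transpose_mat P.B *\<^sub>v mkvec m n \<zeta> v = l \<cdot>\<^sub>v mkvec m n \<zeta> v \<and> algebraically_positive P.B"
  proof (rule P.simple_and_algebraically_positive)
    show "P.top_row (\<lambda>_. 1) 1 p = l" if "1 \<le> p" "p \<le> m" for p
      using that s_less unfolding P.top_row_def by (auto simp: algebra_simps)
  next
    fix x y p
    assume rows: "\<And>p. 1 \<le> p \<Longrightarrow> p \<le> m \<Longrightarrow> P.top_row x y p = l * x p" and "1 \<le> p" "p \<le> m"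
    show "x p = y"
    proof (rule superdiagonal_split_kernel[OF l_pos e(1) s(1) s_less t])
      show "x (Suc q) = x q" if "1 \<le> q" "q < m" "q \<noteq> s" for q
        using rows[of q] that l_pos unfolding P.top_row_def by (auto split: if_split_asm)
      show "e * l * x (Suc s) + (1 - e) * l * x t = l * x s"
        using rows[of s] s s_less unfolding P.top_row_def by simp
      show "x m = y" using rows[of m] m l_pos s_less unfolding P.top_row_def by auto
    qed fact+
  next
    show "P.top_col \<zeta> q + (if q = 1 then A $$ (0, j - 1) * v $ 0 else 0)
        + (if q = t then c - A $$ (0, j - 1) * v $ 0 else 0) = l * \<zeta> q" if "1 \<le> q" "q \<le> m" for q
      using split_superdiagonal_weights_left_top[OF s(1) t(1,3) e(1) that(1)] unfolding P.top_col_def \<zeta>_def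
      by simp
  next
    show "l * \<zeta> m = c" using s_less t l_pos by (auto simp: \<zeta>_def split_superdiagonal_weights_def)
  next
    show "\<zeta> p > 0" for p
      using av_pos l_pos c_pos e by (simp add: \<zeta>_def split_superdiagonal_weights_def mult.assoc)
  qed
  moreover have "P.B $$ (s - 1, t - 1) * mkvec m n \<zeta> v $ (s - 1)
      + (\<Sum>i = 1..n - k. P.B $$ (m + k + i - 1, t - 1) * mkvec m n \<zeta> v $ (m + k + i - 1))
      = (if t \<le> s then c / e - A $$ (0, j - 1) * v $ 0 else c - e * A $$ (0, j - 1) * v $ 0)"
    unfolding P.border_column_sum[OF t(3)[unfolded Suc_eq_plus1[symmetric]]] \<zeta>_s using e l_pos
    by (auto simp: field_simps)
  ultimately show ?thesis unfolding B_eq by blast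
qed

lemma split_corner_weights_left_top:
  assumes t: "1 \<le> t" and e: "0 < e" and q: "1 \<le> q" "q \<le> m"
  defines "\<zeta> \<equiv> split_corner_weights e t" and "a \<equiv> A $$ (0, j - 1) * v $ 0"
  shows "(if 2 \<le> q then l * \<zeta> (q - 1) else 0) + (if q = t then (1 - e) * l * \<zeta> m else 0)
      + (if q = 1 then a else 0) + (if q = t then c - a else 0) = l * \<zeta> q"
proof -
  have \<zeta>_lo: "\<zeta> i = a / l" if "i < t" for i using that by (auto simp: \<zeta>_def a_def split_corner_weights_def)
  have \<zeta>_hi: "\<zeta> i = c / (e * l)" if "t \<le> i" for i using that t by (auto simp: \<zeta>_def split_corner_weights_def)
  consider "q < t" | "q = t" | "t < q" by linarith
  thus ?thesis
  proof cases
    case 1 thus ?thesis using q l_pos by (cases "q = 1") (simp_all add: \<zeta>_lo)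
  next
    case 2 thus ?thesis using q e l_pos by (cases "q = 1") (simp_all add: \<zeta>_lo \<zeta>_hi field_simps)
  next
    case 3
    hence "2 \<le> q" "t \<le> q - 1" "q \<noteq> t" using t by auto
    thus ?thesis using 3 q e l_pos by (simp add: \<zeta>_hi)
  qed
qed

lemma split_corner_extension:
  assumes t: "1 \<le> t" "t \<le> m" and e: "0 < e" "e < 1"
  defines "\<zeta> \<equiv> split_corner_weights e t" and "Bt \<equiv> mkB A m n j k (top3 A l e m n j k t)"
  shows "simple_eigenvalue Bt l \<and> Bt *\<^sub>v w = l \<cdot>\<^sub>v w
    \<and> transpose_mat Bt *\<^sub>v mkvec m n \<zeta> v = l \<cdot>\<^sub>v mkvec m n \<zeta> v \<and> algebraically_positive Bt
    \<and> Bt $$ (m - 1, t - 1) * mkvec m n \<zeta> v $ (m - 1)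
      + (\<Sum>i = 1..n - k. Bt $$ (m + k + i - 1, t - 1) * mkvec m n \<zeta> v $ (m + k + i - 1))
      = c / e - A $$ (0, j - 1) * v $ 0"
proof -
  interpret P: bordered A m n j k l c u v "\<lambda>_. l" "(1 - e) * l" "e * l" m t
    using m t by unfold_locales auto
  have B_eq: "Bt = P.B" unfolding Bt_def using j(1) k t by (rule mkB_top3_eq)
  have \<zeta>_m: "\<zeta> m = c / (e * l)" using t by (auto simp: \<zeta>_def split_corner_weights_def)
  have "simple_eigenvalue P.B l \<and> P.B *\<^sub>v w = l \<cdot>\<^sub>v w
      \<and> transpose_mat P.B *\<^sub>v mkvec m n \<zeta> v = l \<cdot>\<^sub>v mkvec m n \<zeta> v \<and> algebraically_positive P.B"
  proof (rule P.simple_and_algebraically_positive)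
    show "P.top_row (\<lambda>_. 1) 1 p = l" if "1 \<le> p" "p \<le> m" for p
      using that unfolding P.top_row_def by (auto simp: algebra_simps)
  next
    fix x y p
    assume rows: "\<And>p. 1 \<le> p \<Longrightarrow> p \<le> m \<Longrightarrow> P.top_row x y p = l * x p" and p: "1 \<le> p" "p \<le> m"
    have "x (Suc q) = x q" if "1 \<le> q" "q < m" for q
      using rows[of q] that l_pos unfolding P.top_row_def by auto
    hence lower: "x q = x m" if "1 \<le> q" "q \<le> m" for q using that by (rule chain_eq_last)
    have "(1 - e) * l * x t + e * l * y = l * x m" using rows[of m] m unfolding P.top_row_def by simp
    hence "e * l * (y - x m) = 0" using lower[of t] t by (simp add: algebra_simps)
    hence "x m = y" using e l_pos by simp
    thus "x p = y" using lower[of p] p by simp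
  next
    show "P.top_col \<zeta> q + (if q = 1 then A $$ (0, j - 1) * v $ 0 else 0)
        + (if q = t then c - A $$ (0, j - 1) * v $ 0 else 0) = l * \<zeta> q" if "1 \<le> q" "q \<le> m" for q
      using split_corner_weights_left_top[OF t(1) e(1) that] unfolding P.top_col_def \<zeta>_def by simp
  next
    show "e * l * \<zeta> m = c" using e l_pos by (simp add: \<zeta>_m)
  next
    show "\<zeta> p > 0" for p using av_pos l_pos c_pos e by (simp add: \<zeta>_def split_corner_weights_def)
  qed
  moreover have "P.B $$ (m - 1, t - 1) * mkvec m n \<zeta> v $ (m - 1)
      + (\<Sum>i = 1..n - k. P.B $$ (m + k + i - 1, t - 1) * mkvec m n \<zeta> v $ (m + k + i - 1))
      = c / e - A $$ (0, j - 1) * v $ 0"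
  proof -
    have "t \<noteq> Suc m" using t by simp
    thus ?thesis unfolding P.border_column_sum[OF \<open>t \<noteq> Suc m\<close>] \<zeta>_m using e l_pos by (simp add: field_simps)
  qed
  ultimately show ?thesis unfolding B_eq by blast
qed

end

theorem theorem2p5:
  fixes A :: "real mat" and u v :: "real vec" and l eps c :: real and n m j k :: nat
  assumes eps: "0 < eps" "eps < 1"
    and nm: "n \<ge> 1" "m \<ge> 1"
    and A: "A \<in> carrier_mat n n"
    and j: "1 \<le> j" "j \<le> n" and a1j: "A $$ (0, j - 1) > 0"
    and lpos: "l > 0" and simple: "simple_eigenvalue A l"
    and u: "u \<in> carrier_vec n" "\<forall>i<n. u $ i > 0" "A *\<^sub>v u = l \<cdot>\<^sub>v u"
    and v: "v \<in> carrier_vec n" "\<forall>i<n. v $ i > 0" "transpose_mat A *\<^sub>v v = l \<cdot>\<^sub>v v"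
    and k: "1 \<le> k" "k \<le> n"
    and c_def: "c \<equiv> A $$ (0, j - 1) * v $ 0
                   + (\<Sum>i = 1..n - k. A $$ (k + i - 1, j - 1) * v $ (k + i - 1))"
    and cpos: "c > 0"
  shows
   "(let a = A $$ (0, j - 1); v1 = v $ 0;
         w = mkvec m n (\<lambda>_. u $ (j - 1)) u in
     (\<forall>s\<in>{1..m}.
        let B = mkB A m n j k (top1 A l m n j k s);
            z = mkvec m n (\<lambda>i. if i \<le> s - 1 then a * v1 / l else c / l) v in
        simple_eigenvalue B l \<and> B *\<^sub>v w = l \<cdot>\<^sub>v w \<and> transpose_mat B *\<^sub>v z = l \<cdot>\<^sub>v z
        \<and> algebraically_positive B)
   \<and>
     (\<forall>s\<in>{1..m - 1}. \<forall>t\<in>{1..m} - {s + 1}.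
        let Bf = (\<lambda>e. mkB A m n j k (top2 A l e m n j k s t));
            zf = (\<lambda>e. mkvec m n (\<lambda>i.
                   if t \<le> s then
                     (if i \<le> t - 1 then a * v1 / l else if i \<le> s then c / (e * l) else c / l)
                   else
                     (if i \<le> s then a * v1 / l else if i \<le> t - 1 then e * a * v1 / l else c / l)) v);
            Q = (\<lambda>e. Bf e $$ (s - 1, t - 1) * zf e $ (s - 1)
                   + (\<Sum>i = 1..n - k. Bf e $$ (m + k + i - 1, t - 1) * zf e $ (m + k + i - 1)));
            B = Bf eps; z = zf eps in
        simple_eigenvalue B l \<and> B *\<^sub>v w = l \<cdot>\<^sub>v w \<and> transpose_mat B *\<^sub>v z = l \<cdot>\<^sub>v z
        \<and> algebraically_positive B
        \<and> Q eps = (if t \<le> s then c / eps - a * v1 else c - eps * a * v1)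
        \<and> (\<exists>e. 0 < e \<and> e < 1 \<and> Q e > 0))
   \<and>
     (\<forall>t\<in>{1..m}.
        let Bf = (\<lambda>e. mkB A m n j k (top3 A l e m n j k t));
            zf = (\<lambda>e. mkvec m n (\<lambda>i. if i \<le> t - 1 then a * v1 / l else c / (e * l)) v);
            Q = (\<lambda>e. Bf e $$ (m - 1, t - 1) * zf e $ (m - 1)
                   + (\<Sum>i = 1..n - k. Bf e $$ (m + k + i - 1, t - 1) * zf e $ (m + k + i - 1)));
            B = Bf eps; z = zf eps in
        simple_eigenvalue B l \<and> B *\<^sub>v w = l \<cdot>\<^sub>v w \<and> transpose_mat B *\<^sub>v z = l \<cdot>\<^sub>v z
        \<and> algebraically_positive B
        \<and> Q eps = c / eps - a * v1
        \<and> (\<exists>e. 0 < e \<and> e < 1 \<and> Q e > 0)))"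
proof -
  have c: "c = A $$ (0, j - 1) * v $ 0 + (\<Sum>i\<in>{k..<n}. A $$ (i, j - 1) * v $ i)"
    using c_def sum_tail_reindex[OF k(1), of "\<lambda>i. A $$ (i, j - 1) * v $ i" n] by simp
  interpret extension_data A m n j k l c u v
    using A nm j a1j lpos simple u v k c cpos by unfold_locales auto
  obtain e0 where e0: "0 < e0" "e0 < 1"
    "c / e0 - A $$ (0, j - 1) * v $ 0 > 0" "c - e0 * (A $$ (0, j - 1) * v $ 0) > 0"
    using av_pos cpos by (rule exists_eps_both_pos)
  show ?thesis
    unfolding Let_def
    using shifted_column_extension split_superdiagonal_extension[OF _ _ _ _ _ eps]
      split_superdiagonal_extension[OF _ _ _ _ _ e0(1,2)] split_corner_extension[OF _ _ eps]
      split_corner_extension[OF _ _ e0(1,2)] e0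
    unfolding shifted_column_weights_def split_superdiagonal_weights_def split_corner_weights_def
    by (intro conjI ballI exI[of _ e0]) (auto simp: mult.assoc)
qed

end
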